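(* Let $\pi$ be a standard permutation on $\mathcal{A}$ and assume $M_\pi\in\mathcal{H}(m_1,\dots,m_n)$ with $m_1\ge2$ and $m_i\ge1$ for every $2\le i\le n$. Let $m_{1,1},m_{1,2}\ge1$ be any integers with $m_{1,1}+m_{1,2}=m_1$. Then there exists an irreducible permutation $\pi'$ which is a simple extension of $\pi$ and such that $M_{\pi'}\in\mathcal{H}(m_{1,1},m_{1,2},m_2,\dots,m_n)$.
   Context: A permutation on a finite alphabet $\mathcal{A}$ ($d=|\mathcal{A}|$) is a pair $\pi=(\pi_{\mathrm t},\pi_{\mathrm b})$ of bijections $\mathcal{A}\to\{1,\dots,d\}$, displayed with top row $\alpha_{\mathrm t,1}\cdots\alpha_{\mathrm t,d}$ and bottom row $\alpha_{\mathrm b,1}\cdots\alpha_{\mathrm b,d}$, $\alpha_{\varepsilon,j}=\pi_\varepsilon^{-1}(j)$; it is irreducible if $\pi_{\mathrm t}^{-1}(\{1,\dots,j\})\ne\pi_{\mathrm b}^{-1}(\{1,\dots,j\})$ for $1\le j<d$. $\pi$ is standard if $\pi_{\mathrm b}(\alpha_{\mathrm t,d})=1$ and $\pi_{\mathrm b}(\alpha_{\mathrm t,1})=d$. Given a letter $\alpha'\notin\mathcal{A}$ and $\beta,\beta'\in\mathcal{A}$ with $(\beta,\beta')\ne(\alpha_{\mathrm t,1},\alpha_{\mathrm b,1})$, the permutation on $\mathcal{A}\cup\{\alpha'\}$ obtained by inserting $\alpha'$ just before $\beta$ in the top row and just before $\beta'$ in the bottom row is called a simple extension of $\pi$. $M_\pi$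 is the translation surface obtained by suspension: the polygon $P_\pi$ whose top boundary consists of the vectors $1+i(\pi_{\mathrm b}(\alpha)-\pi_{\mathrm t}(\alpha))$ in the order of $\pi_{\mathrm t}$ and bottom boundary of the same vectors in the order of $\pi_{\mathrm b}$, both from $0$ to $d$, with sides labelled by the same letter identified by translation. $M_\pi\in\mathcal{H}(m_1,\dots,m_n)$ means that the distinct points of $M_\pi$ coming from vertices of $P_\pi$ (other than possible removable points of angle $2\pi$ — here all $m_i\ge1$) are cone points of total angles $2\pi(m_1+1),\dots,2\pi(m_n+1)$. *)

theory Defs
  imports "HOL-Analysis.Analysis"
begin

text \<open>A permutation on a finite alphabet A is a pair (pt, pb) of bijections A -> {1..d},
  d = card A.  Values of pt, pb outside A are irrelevant.\<close>

definition is_perm :: "'a set \<Rightarrow> ('a \<Rightarrow> nat) \<Rightarrow> ('a \<Rightarrow> nat) \<Rightarrow> bool" where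
  "is_perm A pt pb \<longleftrightarrow> finite A \<and> bij_betw pt A {1..card A} \<and> bij_betw pb A {1..card A}"

definition irreducible_perm :: "'a set \<Rightarrow> ('a \<Rightarrow> nat) \<Rightarrow> ('a \<Rightarrow> nat) \<Rightarrow> bool" where
  "irreducible_perm A pt pb \<longleftrightarrow> is_perm A pt pb \<and>
     (\<forall>j. 1 \<le> j \<and> j < card A \<longrightarrow> {a \<in> A. pt a \<le> j} \<noteq> {a \<in> A. pb a \<le> j})"

definition standard_perm :: "'a set \<Rightarrow> ('a \<Rightarrow> nat) \<Rightarrow> ('a \<Rightarrow> nat) \<Rightarrow> bool" where
  "standard_perm A pt pb \<longleftrightarrow> is_perm A pt pb \<and>
     (\<exists>a\<in>A. pt a = card A \<and> pb a = 1) \<and> (\<exists>b\<in>A. pt b = 1 \<and> pb b = card A)"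

text \<open>(pt', pb') on A \<union> {a'} is obtained from (pt, pb) on A by inserting a' just before
  b in the top row and just before b' in the bottom row.\<close>
definition insert_before :: "('a \<Rightarrow> nat) \<Rightarrow> 'a \<Rightarrow> 'a \<Rightarrow> 'a \<Rightarrow> nat" where
  "insert_before p a' b x = (if x = a' then p b else if p x \<ge> p b then p x + 1 else p x)"

definition simple_extension ::
  "'a set \<Rightarrow> ('a \<Rightarrow> nat) \<Rightarrow> ('a \<Rightarrow> nat) \<Rightarrow> 'a \<Rightarrow> ('a \<Rightarrow> nat) \<Rightarrow> ('a \<Rightarrow> nat) \<Rightarrow> bool" where
  "simple_extension A pt pb a' pt' pb' \<longleftrightarrow> a' \<notin> A \<and>
     (\<exists>b\<in>A. \<exists>b'\<in>A. \<not> (pt b = 1 \<and> pb b' = 1) \<and>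
        (\<forall>x \<in> insert a' A. pt' x = insert_before pt a' b x \<and> pb' x = insert_before pb a' b' x))"

definition side_vec :: "('a \<Rightarrow> nat) \<Rightarrow> ('a \<Rightarrow> nat) \<Rightarrow> 'a \<Rightarrow> complex" where
  "side_vec pt pb a = Complex 1 (real (pb a) - real (pt a))"

definition top_vertex :: "'a set \<Rightarrow> ('a \<Rightarrow> nat) \<Rightarrow> ('a \<Rightarrow> nat) \<Rightarrow> nat \<Rightarrow> complex" where
  "top_vertex A pt pb j = (\<Sum>a\<in>{a\<in>A. pt a \<le> j}. side_vec pt pb a)"

definition bot_vertex :: "'a set \<Rightarrow> ('a \<Rightarrow> nat) \<Rightarrow> ('a \<Rightarrow> nat) \<Rightarrow> nat \<Rightarrow> complex" where
  "bot_vertex A pt pb j = (\<Sum>a\<in>{a\<in>A. pb a \<le> j}. side_vec pt pb a)"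

text \<open>Corners of P_pi, indexed by k < 2d in counterclockwise order:
  k = 0..d are B_0, ..., B_d (B_0 = T_0 = 0, B_d = T_d = d), k = d+1..2d-1 are T_{d-1}, ..., T_1.\<close>
definition corner_pos :: "'a set \<Rightarrow> ('a \<Rightarrow> nat) \<Rightarrow> ('a \<Rightarrow> nat) \<Rightarrow> nat \<Rightarrow> complex" where
  "corner_pos A pt pb k = (if k \<le> card A then bot_vertex A pt pb k
                            else top_vertex A pt pb (2 * card A - k))"

text \<open>Interior angle of P_pi at corner k (polygon traversed counterclockwise), in [0, 2pi).\<close>
definition corner_angle :: "'a set \<Rightarrow> ('a \<Rightarrow> nat) \<Rightarrow> ('a \<Rightarrow> nat) \<Rightarrow> nat \<Rightarrow> real" where
  "corner_angle A pt pb k =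
     (let d = card A; v = corner_pos A pt pb k;
          u = corner_pos A pt pb ((k + 2 * d - 1) mod (2 * d));
          w = corner_pos A pt pb ((k + 1) mod (2 * d))
      in Arg2pi ((u - v) / (w - v)))"

definition top_corner :: "'a set \<Rightarrow> nat \<Rightarrow> nat" where
  "top_corner A j = (if j = 0 then 0 else 2 * card A - j)"

definition bot_corner :: "'a set \<Rightarrow> nat \<Rightarrow> nat" where
  "bot_corner A j = j"

text \<open>Gluing side a of the top with side a of the bottom identifies their endpoints.\<close>
definition glue_rel :: "'a set \<Rightarrow> ('a \<Rightarrow> nat) \<Rightarrow> ('a \<Rightarrow> nat) \<Rightarrow> (nat \<times> nat) set" where
  "glue_rel A pt pb =
     (\<Union>a\<in>A. {(top_corner A (pt a - 1), bot_corner A (pb a - 1)),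
              (top_corner A (pt a), bot_corner A (pb a))})"

definition vertex_equiv :: "'a set \<Rightarrow> ('a \<Rightarrow> nat) \<Rightarrow> ('a \<Rightarrow> nat) \<Rightarrow> (nat \<times> nat) set" where
  "vertex_equiv A pt pb = (glue_rel A pt pb \<union> (glue_rel A pt pb)\<inverse>)\<^sup>*"

text \<open>The points of M_pi coming from vertices of P_pi = classes of corners.\<close>
definition vertex_classes :: "'a set \<Rightarrow> ('a \<Rightarrow> nat) \<Rightarrow> ('a \<Rightarrow> nat) \<Rightarrow> nat set set" where
  "vertex_classes A pt pb = {vertex_equiv A pt pb `` {k} | k. k < 2 * card A}"

definition class_angle :: "'a set \<Rightarrow> ('a \<Rightarrow> nat) \<Rightarrow> ('a \<Rightarrow> nat) \<Rightarrow> nat set \<Rightarrow> real" where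
  "class_angle A pt pb C = (\<Sum>k\<in>C. corner_angle A pt pb k)"

text \<open>M_pi \<in> H(ms): the non-removable vertex points (angle \<noteq> 2pi) are in bijection with the
  entries of ms, with cone angles 2pi(m_i+1).\<close>
definition in_stratum :: "'a set \<Rightarrow> ('a \<Rightarrow> nat) \<Rightarrow> ('a \<Rightarrow> nat) \<Rightarrow> nat list \<Rightarrow> bool" where
  "in_stratum A pt pb ms \<longleftrightarrow>
     (\<exists>f. bij_betw f {C \<in> vertex_classes A pt pb. class_angle A pt pb C \<noteq> 2 * pi} {..<length ms} \<and>
          (\<forall>C \<in> {C \<in> vertex_classes A pt pb. class_angle A pt pb C \<noteq> 2 * pi}.
              class_angle A pt pb C = 2 * pi * (real (ms ! f C) + 1)))"

end

theory Submission
  imports Defs "HOL-Combinatorics.Permutations"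
begin

(* The gluing of P_pi is encoded by a permutation of the top vertex indices 0..d: from the top
   vertex T_j go down along the side starting there to a bottom vertex, and back up along the
   side ending there; this lands in T_(vertex_perm j). The points of M_pi are the orbits of
   vertex_perm. The interior angles at the corners of a point add up to pi times the number of
   its corners other than the two endpoints 0 and d, because the inclinations of the sides cancel
   out; hence an orbit Q has cone angle 2 pi |Q - {0, d}|.
   Inserting the new letter before b on top and before b' on the bottom, where T_(pt b - 1) and
   T_(pt b' - 1) lie on the same orbit, cuts that orbit into two arcs, closes one of them up
   through the new vertex and leaves all other orbits unchanged. Choosing b' so that the first arc
   contains m12 vertices other than 0 and d gives the two new weights m12 + 1 and m11 + 1.
   Irreducibility is automatic: the first top letter of the standard permutation stays first on
   the top row and last on the bottom row. *)

section \<open>Forward orbits of injective self-maps\<close>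

definition forward_orbit :: "('b \<Rightarrow> 'b) \<Rightarrow> 'b \<Rightarrow> 'b set" where
  "forward_orbit f x = range (\<lambda>n. (f ^^ n) x)"

lemma funpow_add_apply: "(f ^^ (m + n)) x = (f ^^ m) ((f ^^ n) x)"
  by (simp add: funpow_add)

lemma funpow_mem: "f ` S \<subseteq> S \<Longrightarrow> x \<in> S \<Longrightarrow> (f ^^ n) x \<in> S"
  by (induction n) auto

lemma forward_orbit_subset: "f ` S \<subseteq> S \<Longrightarrow> x \<in> S \<Longrightarrow> forward_orbit f x \<subseteq> S"
  unfolding forward_orbit_def using funpow_mem[of f S x] by auto

lemma funpow_in_forward_orbit: "(f ^^ n) x \<in> forward_orbit f x"
  unfolding forward_orbit_def by auto

lemma self_in_forward_orbit: "x \<in> forward_orbit f x"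
  using funpow_in_forward_orbit[of 0 f x] by simp

lemma forward_orbit_step: "y \<in> forward_orbit f x \<Longrightarrow> f y \<in> forward_orbit f x"
  unfolding forward_orbit_def by (auto intro: range_eqI[of _ _ "Suc _"])

lemma forward_orbit_periodic:
  assumes "(f ^^ m) x = x" "0 < m"
  shows "forward_orbit f x = (\<lambda>n. (f ^^ n) x) ` {1..m}"
proof -
  have "(f ^^ n) x \<in> (\<lambda>n. (f ^^ n) x) ` {1..m}" for n
  proof (cases "n mod m = 0")
    case True
    then have "(f ^^ n) x = (f ^^ m) x" using funpow_mod_eq[OF assms(1), of n] assms(1) by simp
    then show ?thesis using assms(2) by auto
  next
    case False
    then have "n mod m \<in> {1..m}" using assms(2) by (simp add: Suc_leI order.strict_implies_order)
    moreover have "(f ^^ n) x = (f ^^ (n mod m)) x" using funpow_mod_eq[OF assms(1), of n] by simp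
    ultimately show ?thesis by blast
  qed
  then show ?thesis unfolding forward_orbit_def by auto
qed

lemma forward_orbit_trans: "y \<in> forward_orbit f x \<Longrightarrow> forward_orbit f y \<subseteq> forward_orbit f x"
proof
  fix z assume "y \<in> forward_orbit f x" "z \<in> forward_orbit f y"
  then obtain i j where "y = (f ^^ i) x" "z = (f ^^ j) y" unfolding forward_orbit_def by auto
  then have "z = (f ^^ (j + i)) x" by (simp add: funpow_add_apply)
  then show "z \<in> forward_orbit f x" by (simp add: funpow_in_forward_orbit)
qed

locale finite_inj_map =
  fixes S :: "'b set" and f :: "'b \<Rightarrow> 'b"
  assumes finite: "finite S" and inj: "inj_on f S" and maps: "f ` S \<subseteq> S"
begin

lemma funpow_inj: "x \<in> S \<Longrightarrow> y \<in> S \<Longrightarrow> (f ^^ n) x = (f ^^ n) y \<Longrightarrow> x = y"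
proof (induction n arbitrary: x y)
  case (Suc n)
  have "(f ^^ n) x \<in> S" "(f ^^ n) y \<in> S" using funpow_mem[OF maps] Suc.prems(1,2) by auto
  moreover have "f ((f ^^ n) x) = f ((f ^^ n) y)" using Suc.prems(3) by simp
  ultimately have "(f ^^ n) x = (f ^^ n) y" using inj by (simp add: inj_on_def)
  then show ?case using Suc by blast
qed simp

lemma funpow_cancel:
  assumes "x \<in> S" "i \<le> j" "(f ^^ i) x = (f ^^ j) x"
  shows "(f ^^ (j - i)) x = x"
proof (rule funpow_inj)
  have "(f ^^ i) ((f ^^ (j - i)) x) = (f ^^ (i + (j - i))) x"
    by (rule funpow_add_apply[symmetric])
  also have "\<dots> = (f ^^ i) x" using assms(2,3) by simp
  finally show "(f ^^ i) ((f ^^ (j - i)) x) = (f ^^ i) x" .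
qed (use assms(1) funpow_mem[OF maps] in auto)

lemma period_exists:
  assumes "x \<in> S"
  shows "\<exists>m. 0 < m \<and> (f ^^ m) x = x"
proof -
  have "\<not> inj_on (\<lambda>n. (f ^^ n) x) {..card S}"
  proof
    assume "inj_on (\<lambda>n. (f ^^ n) x) {..card S}"
    moreover have "(\<lambda>n. (f ^^ n) x) ` {..card S} \<subseteq> S" using funpow_mem[OF maps assms] by auto
    ultimately have "card {..card S} \<le> card S" by (rule card_inj_on_le[OF _ _ finite])
    then show False by simp
  qed
  then obtain i j where "i < j" "(f ^^ i) x = (f ^^ j) x"
    unfolding inj_on_def by (metis linorder_neq_iff)
  then have "0 < j - i" "(f ^^ (j - i)) x = x" using funpow_cancel[OF assms] by auto
  then show ?thesis by blast
qed

lemma minimal_period: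
  assumes "x \<in> S"
  obtains n where "0 < n" "(f ^^ n) x = x"
    "\<And>i j. i < n \<Longrightarrow> j < n \<Longrightarrow> (f ^^ i) x = (f ^^ j) x \<Longrightarrow> i = j"
proof -
  note ex = period_exists[OF assms]
  define n where "n = (LEAST m. 0 < m \<and> (f ^^ m) x = x)"
  have n: "0 < n" "(f ^^ n) x = x" using LeastI_ex[OF ex] unfolding n_def by auto
  have dist: "i = j" if "i < n" "j < n" "(f ^^ i) x = (f ^^ j) x" for i j
  proof (rule ccontr)
    assume "i \<noteq> j"
    then consider "i < j" | "j < i" by linarith
    then show False
    proof cases
      case 1
      then have "(f ^^ (j - i)) x = x" using funpow_cancel[OF assms] that(3) by simp
      then show False using Least_le[of "\<lambda>m. 0 < m \<and> (f ^^ m) x = x" "j - i"] 1 that(2)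
        unfolding n_def[symmetric] by simp
    next
      case 2
      then have "(f ^^ (i - j)) x = x" using funpow_cancel[OF assms] that(3) by simp
      then show False using Least_le[of "\<lambda>m. 0 < m \<and> (f ^^ m) x = x" "i - j"] 2 that(1)
        unfolding n_def[symmetric] by simp
    qed
  qed
  from n dist show ?thesis by (rule that)
qed

lemma forward_orbit_eq:
  assumes "x \<in> S" "y \<in> forward_orbit f x"
  shows "forward_orbit f y = forward_orbit f x"
proof (rule antisym)
  obtain m where m: "0 < m" "(f ^^ m) x = x" using period_exists[OF assms(1)] by blast
  obtain i where y: "y = (f ^^ i) x" using assms(2) unfolding forward_orbit_def by blast
  have "(f ^^ (m * i - i)) y = (f ^^ (m * i - i + i)) x"
    unfolding y by (rule funpow_add_apply[symmetric])
  also have "m * i - i + i = m * i"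
    using m(1) by (simp add: Suc_leI)
  also have "(f ^^ (m * i)) x = (f ^^ (m * i mod m)) x"
    by (rule funpow_mod_eq[OF m(2), symmetric])
  also have "\<dots> = x" by simp
  finally have "x \<in> forward_orbit f y" by (metis funpow_in_forward_orbit)
  then show "forward_orbit f x \<subseteq> forward_orbit f y" by (rule forward_orbit_trans)
qed (rule forward_orbit_trans[OF assms(2)])

lemma step_in_forward_orbit_iff:
  assumes "y \<in> S"
  shows "f y \<in> forward_orbit f x \<longleftrightarrow> y \<in> forward_orbit f x"
proof
  assume fy: "f y \<in> forward_orbit f x"
  obtain m where m: "0 < m" "(f ^^ m) y = y" using period_exists[OF assms] by blast
  have "(f ^^ (m - 1)) (f y) = (f ^^ Suc (m - 1)) y" by (simp only: funpow_Suc_right o_apply)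
  also have "\<dots> = y" using m by simp
  finally have "y \<in> forward_orbit f (f y)" using funpow_in_forward_orbit[of "m - 1" f "f y"] by simp
  then show "y \<in> forward_orbit f x" using forward_orbit_trans[OF fy] by blast
qed (rule forward_orbit_step)

lemma forward_orbits_disjoint:
  assumes "x \<in> S" "y \<in> S" "y \<notin> forward_orbit f x"
  shows "forward_orbit f x \<inter> forward_orbit f y = {}"
proof -
  have "forward_orbit f x = forward_orbit f y"
    if "z \<in> forward_orbit f x" "z \<in> forward_orbit f y" for z
    using forward_orbit_eq[OF assms(1) that(1)] forward_orbit_eq[OF assms(2) that(2)] by simp
  then show ?thesis using assms(3) self_in_forward_orbit[of y f] by blast
qed

end

definition skip :: "nat \<Rightarrow> nat \<Rightarrow> nat" where
  "skip p j = (if j < p then j else j + 1)"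

lemma inj_skip: "inj (skip p)"
  unfolding skip_def by (rule injI) (auto split: if_splits)

lemma skip_neq: "skip p j \<noteq> p"
  unfolding skip_def by auto

lemma skip_le: "j \<le> d \<Longrightarrow> skip p j \<le> d + 1"
  unfolding skip_def by auto

lemma skip_surj:
  assumes "y \<le> d + 1" "y \<noteq> p" "p \<le> d"
  shows "\<exists>j \<le> d. skip p j = y"
proof (cases "y < p")
  case True
  then show ?thesis using assms unfolding skip_def by (intro exI[of _ y]) auto
next
  case False
  then show ?thesis using assms unfolding skip_def by (intro exI[of _ "y - 1"]) auto
qed

lemma bij_betw_skip:
  assumes "1 \<le> p" "p \<le> d"
  shows "bij_betw (skip p) {1..d} ({1..d + 1} - {p})"
proof -
  have "skip p ` {1..d} = {1..d + 1} - {p}"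
  proof (intro equalityI subsetI)
    fix y assume "y \<in> {1..d + 1} - {p}"
    then obtain j where "j \<le> d" "skip p j = y" using skip_surj[of y d p] assms by auto
    moreover have "1 \<le> j" using \<open>skip p j = y\<close> \<open>y \<in> {1..d + 1} - {p}\<close> assms
      unfolding skip_def by (auto split: if_splits)
    ultimately show "y \<in> skip p ` {1..d}" by auto
  qed (use assms skip_neq in \<open>auto simp: skip_def\<close>)
  then show ?thesis using inj_on_subset[OF inj_skip] by (auto simp: bij_betw_def)
qed

(* tau' is tau renumbered by skip p, with rerouting: J now goes to the new point p, p goes to the
   old successor of s, and s to the old successor of J. The cycle of s thus splits into the arc
   from the successor of s to J, closed up through p, and the arc from the successor of J to s. *)
locale orbit_split = finite_inj_map "{..d}" tau for d :: nat and tau :: "nat \<Rightarrow> nat" +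
  fixes tau' :: "nat \<Rightarrow> nat" and p s J n k :: nat
  assumes s_le: "s \<le> d"
    and period: "0 < n" "(tau ^^ n) s = s"
    and distinct: "\<And>i j. i < n \<Longrightarrow> j < n \<Longrightarrow> (tau ^^ i) s = (tau ^^ j) s \<Longrightarrow> i = j"
    and k: "0 < k" "k < n" "(tau ^^ k) s = J"
    and tau'_skip: "\<And>j. j \<le> d \<Longrightarrow> j \<noteq> s \<Longrightarrow> j \<noteq> J \<Longrightarrow> tau' (skip p j) = skip p (tau j)"
    and tau'_J: "tau' (skip p J) = p"
    and tau'_s: "tau' (skip p s) = skip p (tau J)"
    and tau'_p: "tau' p = skip p (tau s)"
begin

lemma funpow_avoids:
  assumes "0 < i" "i < n" "i \<noteq> k"
  shows "(tau ^^ i) s \<noteq> s" "(tau ^^ i) s \<noteq> J"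
  using distinct[of i 0] distinct[of i k] assms period k by auto

lemma funpow_tau'_skip:
  assumes "x \<le> d" "\<And>l. l < m \<Longrightarrow> (tau ^^ l) x \<noteq> s \<and> (tau ^^ l) x \<noteq> J"
  shows "(tau' ^^ m) (skip p x) = skip p ((tau ^^ m) x)"
  using assms(2)
proof (induction m)
  case (Suc m)
  have IH: "(tau' ^^ m) (skip p x) = skip p ((tau ^^ m) x)"
    using Suc.IH Suc.prems by simp
  have "(tau ^^ m) x \<le> d" using funpow_mem[OF maps] assms(1) by auto
  moreover have "(tau ^^ m) x \<noteq> s" "(tau ^^ m) x \<noteq> J" using Suc.prems[of m] by simp_all
  ultimately have "tau' (skip p ((tau ^^ m) x)) = skip p (tau ((tau ^^ m) x))"
    by (rule tau'_skip)
  then show ?case using IH by simp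
qed simp

lemma forward_orbit_p:
  "forward_orbit tau' p = insert p (skip p ` (\<lambda>i. (tau ^^ i) s) ` {1..k})"
proof -
  have tau_s: "tau s \<le> d" using maps s_le by auto
  have iter: "(tau' ^^ Suc m) p = skip p ((tau ^^ Suc m) s)" if "m < k" for m
  proof -
    have "(tau' ^^ Suc m) p = (tau' ^^ m) (skip p (tau s))"
      using tau'_p by (simp only: funpow_Suc_right o_apply)
    also have "\<dots> = skip p ((tau ^^ m) (tau s))"
    proof (rule funpow_tau'_skip[OF tau_s])
      fix l assume "l < m"
      then show "(tau ^^ l) (tau s) \<noteq> s \<and> (tau ^^ l) (tau s) \<noteq> J"
        using funpow_avoids[of "Suc l"] that k by (simp add: funpow_swap1)
    qed
    also have "(tau ^^ m) (tau s) = (tau ^^ Suc m) s"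
      by (simp only: funpow_Suc_right o_apply)
    finally show ?thesis .
  qed
  have closed: "(tau' ^^ (k + 1)) p = p"
    using iter[of "k - 1"] k tau'_J by simp
  have "forward_orbit tau' p = (\<lambda>i. (tau' ^^ i) p) ` {1..k + 1}"
    by (rule forward_orbit_periodic[OF closed]) simp
  also have "\<dots> = insert p ((\<lambda>i. (tau' ^^ i) p) ` {1..k})"
    using closed by (simp add: atLeastAtMostSuc_conv)
  also have "(\<lambda>i. (tau' ^^ i) p) ` {1..k} = skip p ` (\<lambda>i. (tau ^^ i) s) ` {1..k}"
    unfolding image_image using iter by (intro image_cong) (auto simp: Suc_le_eq gr0_conv_Suc)
  finally show ?thesis .
qed

lemma forward_orbit_skip_s:
  "forward_orbit tau' (skip p s) = skip p ` (\<lambda>i. (tau ^^ i) s) ` {k + 1..n}"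
proof -
  have x: "(tau ^^ Suc k) s \<le> d" using funpow_mem[OF maps, of s "Suc k"] s_le by simp
  have iter: "(tau' ^^ Suc m) (skip p s) = skip p ((tau ^^ (k + Suc m)) s)" if "m < n - k" for m
  proof -
    have "(tau' ^^ Suc m) (skip p s) = (tau' ^^ m) (tau' (skip p s))"
      by (simp only: funpow_Suc_right o_apply)
    also have "\<dots> = (tau' ^^ m) (skip p ((tau ^^ Suc k) s))"
      using tau'_s k(3) by simp
    also have "\<dots> = skip p ((tau ^^ m) ((tau ^^ Suc k) s))"
    proof (rule funpow_tau'_skip[OF x])
      fix l assume "l < m"
      then show "(tau ^^ l) ((tau ^^ Suc k) s) \<noteq> s \<and> (tau ^^ l) ((tau ^^ Suc k) s) \<noteq> J"
        unfolding funpow_add_apply[symmetric] using funpow_avoids[of "l + Suc k"] that by simp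
    qed
    also have "(tau ^^ m) ((tau ^^ Suc k) s) = (tau ^^ (k + Suc m)) s"
      unfolding funpow_add_apply[symmetric] by (simp add: add.commute)
    finally show ?thesis .
  qed
  have closed: "(tau' ^^ (n - k)) (skip p s) = skip p s"
  proof -
    have "Suc (n - k - 1) = n - k" "k + (n - k) = n" using k by auto
    then show ?thesis using iter[of "n - k - 1"] k period by (simp only:)
  qed
  have "forward_orbit tau' (skip p s) = (\<lambda>i. (tau' ^^ i) (skip p s)) ` {1..n - k}"
    by (rule forward_orbit_periodic[OF closed]) (use k in simp)
  also have "\<dots> = (\<lambda>i. skip p ((tau ^^ (k + i)) s)) ` {1..n - k}"
    using iter by (intro image_cong) (auto simp: Suc_le_eq gr0_conv_Suc)
  also have "\<dots> = skip p ` (\<lambda>i. (tau ^^ i) s) ` ((\<lambda>i. k + i) ` {1..n - k})"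
    by (simp only: image_image)
  also have "(\<lambda>i. k + i) ` {1..n - k} = {k + 1..n}"
    using k by (simp add: image_add_atLeastAtMost)
  finally show ?thesis .
qed

lemma forward_orbit_skip_other:
  assumes "j \<le> d" "j \<notin> forward_orbit tau s"
  shows "forward_orbit tau' (skip p j) = skip p ` forward_orbit tau j"
proof -
  have "s \<in> forward_orbit tau s" "J \<in> forward_orbit tau s"
    using self_in_forward_orbit funpow_in_forward_orbit k(3) by metis+
  moreover have "forward_orbit tau s \<inter> forward_orbit tau j = {}"
    by (rule forward_orbits_disjoint) (use s_le assms in auto)
  ultimately have "(tau ^^ l) j \<noteq> s \<and> (tau ^^ l) j \<noteq> J" for l
    using funpow_in_forward_orbit[of l tau j] by auto
  then have "(tau' ^^ i) (skip p j) = skip p ((tau ^^ i) j)" for i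
    using funpow_tau'_skip[OF assms(1)] by blast
  then show ?thesis unfolding forward_orbit_def by (auto simp: image_image)
qed

end

lemma bij_betw_nth_iff_image_mset:
  assumes "finite S"
  shows "(\<exists>g. bij_betw g S {..<length xs} \<and> (\<forall>x\<in>S. f x = xs ! g x))
         \<longleftrightarrow> image_mset f (mset_set S) = mset xs"
proof
  assume "\<exists>g. bij_betw g S {..<length xs} \<and> (\<forall>x\<in>S. f x = xs ! g x)"
  then obtain g where g: "bij_betw g S {..<length xs}" "\<forall>x\<in>S. f x = xs ! g x" by blast
  have "image_mset f (mset_set S) = image_mset ((!) xs) (image_mset g (mset_set S))"
    using g(2) assms by (auto simp: multiset.map_comp intro: image_mset_cong)
  also have "image_mset g (mset_set S) = mset_set {..<length xs}"
    using g(1) by (simp add: image_mset_mset_set bij_betw_def)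
  also have "image_mset ((!) xs) (mset_set {..<length xs}) = mset xs"
    using mset_map[of "(!) xs" "[0..<length xs]"] by (simp add: map_nth lessThan_atLeast0)
  finally show "image_mset f (mset_set S) = mset xs" .
next
  assume eq: "image_mset f (mset_set S) = mset xs"
  obtain ys where ys: "distinct ys" "set ys = S" using finite_distinct_list[OF assms] by blast
  have "mset (map f ys) = mset xs" using eq ys mset_set_set[OF ys(1)] by simp
  then obtain p where p: "p permutes {..<length xs}" "permute_list p xs = map f ys"
    by (rule mset_eq_permutation)
  have len: "length ys = length xs" using \<open>mset (map f ys) = mset xs\<close> by (metis length_map size_mset)
  have nth: "bij_betw ((!) ys) {..<length xs} S" using bij_betw_nth[OF ys(1) _ ys(2)[symmetric]] len by simp
  define g where "g = p \<circ> the_inv_into {..<length xs} ((!) ys)"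
  have "bij_betw g S {..<length xs}"
    unfolding g_def using bij_betw_the_inv_into[OF nth] permutes_imp_bij[OF p(1)] by (rule bij_betw_trans)
  moreover have "f x = xs ! g x" if "x \<in> S" for x
  proof -
    define i where "i = the_inv_into {..<length xs} ((!) ys) x"
    have i: "i < length xs" "ys ! i = x"
      using that bij_betwE[OF bij_betw_the_inv_into[OF nth]] f_the_inv_into_f_bij_betw[OF nth]
      unfolding i_def by auto
    have "f x = map f ys ! i" using i len by simp
    also have "\<dots> = xs ! p i" using p i(1) by (metis permute_list_nth)
    finally show ?thesis unfolding g_def i_def by simp
  qed
  ultimately show "\<exists>g. bij_betw g S {..<length xs} \<and> (\<forall>x\<in>S. f x = xs ! g x)" by blast
qed

lemma ex_bij_betw_image_iff:
  assumes "inj_on h S"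
  shows "(\<exists>f. bij_betw f (h ` S) T \<and> (\<forall>x\<in>S. P x (f (h x))))
         \<longleftrightarrow> (\<exists>g. bij_betw g S T \<and> (\<forall>x\<in>S. P x (g x)))"
proof
  assume "\<exists>f. bij_betw f (h ` S) T \<and> (\<forall>x\<in>S. P x (f (h x)))"
  then obtain f where "bij_betw f (h ` S) T" "\<forall>x\<in>S. P x (f (h x))" by blast
  moreover have "bij_betw (f \<circ> h) S T"
    using bij_betw_trans[OF inj_on_imp_bij_betw[OF assms] \<open>bij_betw f (h ` S) T\<close>] .
  ultimately show "\<exists>g. bij_betw g S T \<and> (\<forall>x\<in>S. P x (g x))" by auto
next
  assume "\<exists>g. bij_betw g S T \<and> (\<forall>x\<in>S. P x (g x))"
  then obtain g where g: "bij_betw g S T" "\<forall>x\<in>S. P x (g x)" by blast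
  have "bij_betw (g \<circ> the_inv_into S h) (h ` S) T"
    using bij_betw_trans[OF bij_betw_the_inv_into[OF inj_on_imp_bij_betw[OF assms]] g(1)] .
  moreover have "\<forall>x\<in>S. P x ((g \<circ> the_inv_into S h) (h x))"
    using g(2) the_inv_into_f_f[OF assms] by simp
  ultimately show "\<exists>f. bij_betw f (h ` S) T \<and> (\<forall>x\<in>S. P x (f (h x)))" by blast
qed

lemma rank_inv_into:
  assumes "bij_betw p A {1..card A}" "1 \<le> i" "i \<le> card A"
  shows "inv_into A p i \<in> A" "p (inv_into A p i) = i"
proof -
  have "i \<in> p ` A" using assms bij_betw_imp_surj_on by fastforce
  then show "inv_into A p i \<in> A" "p (inv_into A p i) = i"
    by (auto intro: inv_into_into f_inv_into_f)
qed

lemma rank_bounds: "bij_betw p A {1..card A} \<Longrightarrow> a \<in> A \<Longrightarrow> 1 \<le> p a \<and> p a \<le> card A"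
  using bij_betwE by fastforce

lemma rank_level_set:
  assumes "bij_betw p A {1..card A}" "1 \<le> i" "i \<le> card A"
  shows "{a \<in> A. p a = i} = {inv_into A p i}"
  using rank_inv_into[OF assms] bij_betw_inv_into_left[OF assms(1)] by auto

lemma rank_sum_step:
  assumes "bij_betw p A {1..card A}" "1 \<le> j" "j \<le> card A"
  shows "(\<Sum>a\<in>{a \<in> A. p a \<le> j}. v a) = (\<Sum>a\<in>{a \<in> A. p a \<le> j - 1}. v a) + v (inv_into A p j)"
proof -
  have fin: "finite A" using bij_betw_finite[OF assms(1)] by (simp only: finite_atLeastAtMost)
  have "{a \<in> A. p a \<le> j} = insert (inv_into A p j) {a \<in> A. p a \<le> j - 1}"
  proof -
    have "{a \<in> A. p a \<le> j} = {a \<in> A. p a = j} \<union> {a \<in> A. p a \<le> j - 1}" by auto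
    then show ?thesis unfolding rank_level_set[OF assms] by simp
  qed
  moreover have "inv_into A p j \<notin> {a \<in> A. p a \<le> j - 1}"
    using rank_inv_into[OF assms] assms(2) by auto
  ultimately show ?thesis using fin by (simp add: add.commute)
qed

lemma bij_betw_pred: "bij_betw (\<lambda>k. k - 1) {1..n} {..<n::nat}"
proof -
  have "(\<lambda>k. k - 1) ` {1..n} = (\<lambda>k. k - 1) ` Suc ` {..<n}" by (simp add: image_Suc_lessThan)
  also have "\<dots> = {..<n}" by (simp add: image_image)
  finally show ?thesis by (auto simp: bij_betw_def inj_on_def)
qed

lemma exists_unit_step_value:
  fixes c :: "nat \<Rightarrow> nat"
  assumes c0: "c 0 = 0" and step: "\<And>i. c (Suc i) \<le> c i + 1" and "m < c n" "1 \<le> m"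
  obtains k where "0 < k" "k < n" "c k = m" "c (k - 1) < m"
proof -
  define k where "k = (LEAST i. m \<le> c i)"
  have ck: "m \<le> c k" unfolding k_def by (rule LeastI[of _ n]) (use assms(3) in simp)
  have below: "c i < m" if "i < k" for i
    using not_less_Least[of i "\<lambda>i. m \<le> c i"] that unfolding k_def by simp
  have "k \<noteq> 0" using ck c0 assms(4) by (cases k) auto
  then have "c k \<le> c (k - 1) + 1" using step[of "k - 1"] by simp
  then have "c k = m" "c (k - 1) < m" using ck below[of "k - 1"] \<open>k \<noteq> 0\<close> by auto
  moreover have "k < n"
  proof (rule ccontr)
    assume "\<not> k < n"
    then have "n < k \<or> n = k" by auto
    then show False using below[of n] assms(3) \<open>c k = m\<close> by auto
  qed
  ultimately show ?thesis using that \<open>k \<noteq> 0\<close> by blast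
qed

lemma filter_mset_replace_weight:
  assumes W: "filter_mset (\<lambda>w. w \<noteq> 1) W = mset (map Suc (m1 # ms))"
    and "1 \<le> m11" "1 \<le> m12"
  shows "filter_mset (\<lambda>w. w \<noteq> 1) (add_mset (Suc m11) (add_mset (Suc m12) (W - {#Suc m1#})))
    = mset (map Suc (m11 # m12 # ms))"
proof -
  have "Suc m1 \<in># filter_mset (\<lambda>w. w \<noteq> 1) W" using W by simp
  then have m1: "Suc m1 \<in># W" "Suc m1 \<noteq> 1" by auto
  have "filter_mset (\<lambda>w. w \<noteq> 1) (W - {#Suc m1#}) = filter_mset (\<lambda>w. w \<noteq> 1) W - {#Suc m1#}"
    using m1 by (simp add: filter_diff_mset)
  then show ?thesis using W assms(2,3) by simp
qed

lemma sum_if_singleton: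
  assumes "finite A" "{a \<in> A. Pr a} = {x}"
  shows "(\<Sum>a\<in>A. if Pr a then f a else 0) = (f x :: 'b::comm_monoid_add)"
proof -
  have "(\<Sum>a\<in>A. if Pr a then f a else 0) = (\<Sum>a\<in>{a \<in> A. Pr a}. f a)"
    using sum.inter_filter[OF assms(1), where P=Pr and g=f] by simp
  then show ?thesis using assms(2) by simp
qed

lemma sum_if_none:
  assumes "\<And>a. a \<in> A \<Longrightarrow> \<not> Pr a"
  shows "(\<Sum>a\<in>A. if Pr a then f a else 0) = (0 :: 'b::comm_monoid_add)"
  using assms by (intro sum.neutral) auto

lemma sum_sum_if_eq:
  assumes "finite C" "finite A"
  shows "(\<Sum>k\<in>C. \<Sum>a\<in>A. if f a = k then g a else (0::'b::comm_monoid_add))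
    = (\<Sum>a\<in>A. if f a \<in> C then g a else 0)"
proof -
  have "(\<Sum>k\<in>C. \<Sum>a\<in>A. if f a = k then g a else (0::'b)) = (\<Sum>a\<in>A. \<Sum>k\<in>C. if f a = k then g a else 0)"
    by (rule sum.swap)
  also have "\<dots> = (\<Sum>a\<in>A. if f a \<in> C then g a else 0)"
    by (rule sum.cong) (use assms(1) in \<open>simp_all add: sum.delta'\<close>)
  finally show ?thesis .
qed

lemma insert_before_new [simp]: "insert_before f a' c a' = f c"
  unfolding insert_before_def by simp

lemma insert_before_old: "x \<noteq> a' \<Longrightarrow> insert_before f a' c x = skip (f c) (f x)"
  unfolding insert_before_def skip_def by auto

lemma bij_betw_insert_before:
  assumes bij: "bij_betw f A {1..card A}" and fin: "finite A" and c: "c \<in> A" and new: "a' \<notin> A"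
  shows "bij_betw (insert_before f a' c) (insert a' A) {1..card (insert a' A)}"
proof -
  have fc: "1 \<le> f c" "f c \<le> card A" using rank_bounds[OF bij c] by auto
  have "bij_betw (skip (f c) \<circ> f) A ({1..card A + 1} - {f c})"
    using bij_betw_trans[OF bij bij_betw_skip[OF fc]] .
  moreover have "insert_before f a' c x = (skip (f c) \<circ> f) x" if "x \<in> A" for x
  proof -
    have "x \<noteq> a'" using that new by blast
    then show ?thesis by (simp add: insert_before_old)
  qed
  ultimately have "bij_betw (insert_before f a' c) A ({1..card A + 1} - {f c})"
    using bij_betw_cong by blast
  moreover have "bij_betw (insert_before f a' c) {a'} {f c}" by (simp add: bij_betw_def)
  ultimately have "bij_betw (insert_before f a' c) (A \<union> {a'}) (({1..card A + 1} - {f c}) \<union> {f c})"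
    by (rule bij_betw_combine) simp
  moreover have "({1..card A + 1} - {f c}) \<union> {f c} = {1..card (insert a' A)}"
    using fc fin new by auto
  ultimately show ?thesis by simp
qed

section \<open>The vertex permutation of a suspension\<close>

(* T_j (j < d) is the start of the top side at position j + 1, which starts at the bottom vertex
   B_(glue_down j); B_k (k > 0) is the end of the bottom side at position k, which ends at the top
   vertex T_(glue_up k). The endpoints T_d = B_d and T_0 = B_0 are fixed. *)
definition glue_down :: "'a set \<Rightarrow> ('a \<Rightarrow> nat) \<Rightarrow> ('a \<Rightarrow> nat) \<Rightarrow> nat \<Rightarrow> nat" where
  "glue_down A pt pb j = (if j < card A then pb (inv_into A pt (j + 1)) - 1 else card A)"

definition glue_up :: "'a set \<Rightarrow> ('a \<Rightarrow> nat) \<Rightarrow> ('a \<Rightarrow> nat) \<Rightarrow> nat \<Rightarrow> nat" where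
  "glue_up A pt pb k = (if k = 0 then 0 else pt (inv_into A pb k))"

definition vertex_perm :: "'a set \<Rightarrow> ('a \<Rightarrow> nat) \<Rightarrow> ('a \<Rightarrow> nat) \<Rightarrow> nat \<Rightarrow> nat" where
  "vertex_perm A pt pb j = glue_up A pt pb (glue_down A pt pb j)"

definition vertex_orbits :: "'a set \<Rightarrow> ('a \<Rightarrow> nat) \<Rightarrow> ('a \<Rightarrow> nat) \<Rightarrow> nat set set" where
  "vertex_orbits A pt pb = forward_orbit (vertex_perm A pt pb) ` {..card A}"

definition corner_class :: "'a set \<Rightarrow> ('a \<Rightarrow> nat) \<Rightarrow> ('a \<Rightarrow> nat) \<Rightarrow> nat set \<Rightarrow> nat set" where
  "corner_class A pt pb Q = top_corner A ` Q \<union> glue_down A pt pb ` Q"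

definition orbit_weight :: "nat \<Rightarrow> nat set \<Rightarrow> nat" where
  "orbit_weight d Q = card (Q - {0, d})"

locale perm_on =
  fixes A :: "'a set" and pt pb :: "'a \<Rightarrow> nat"
  assumes perm: "is_perm A pt pb" and nonempty: "A \<noteq> {}"
begin

lemma finite_A: "finite A" and bij_pt: "bij_betw pt A {1..card A}"
  and bij_pb: "bij_betw pb A {1..card A}"
  using perm unfolding is_perm_def by auto

lemma card_pos: "1 \<le> card A"
  using nonempty finite_A by (simp add: Suc_le_eq card_gt_0_iff)

lemma glue_down_pt:
  assumes "a \<in> A" shows "glue_down A pt pb (pt a - 1) = pb a - 1"
proof -
  have "1 \<le> pt a" "pt a \<le> card A" using rank_bounds[OF bij_pt assms] by auto
  then show ?thesis
    unfolding glue_down_def using bij_betw_inv_into_left[OF bij_pt assms] by simp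
qed

lemma glue_up_pb:
  assumes "a \<in> A" shows "glue_up A pt pb (pb a) = pt a"
proof -
  have "1 \<le> pb a" using rank_bounds[OF bij_pb assms] by auto
  then show ?thesis
    unfolding glue_up_def using bij_betw_inv_into_left[OF bij_pb assms] by simp
qed

lemma glue_down_card [simp]: "glue_down A pt pb (card A) = card A"
  unfolding glue_down_def by simp

lemma glue_up_0 [simp]: "glue_up A pt pb 0 = 0"
  unfolding glue_up_def by simp

lemma bij_glue_down_lessThan: "bij_betw (glue_down A pt pb) {..<card A} {..<card A}"
proof -
  have "bij_betw Suc {..<card A} {1..card A}" by (simp add: image_Suc_lessThan)
  then have "bij_betw (pb \<circ> inv_into A pt \<circ> Suc) {..<card A} {1..card A}"
    using bij_betw_trans[OF bij_betw_inv_into[OF bij_pt] bij_pb] by (rule bij_betw_trans)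
  then have "bij_betw ((\<lambda>k. k - 1) \<circ> (pb \<circ> inv_into A pt \<circ> Suc)) {..<card A} {..<card A}"
    using bij_betw_pred by (rule bij_betw_trans)
  then show ?thesis by (rule bij_betw_cong[THEN iffD1, rotated]) (simp add: glue_down_def)
qed

lemma bij_glue_up_atLeast1: "bij_betw (glue_up A pt pb) {1..card A} {1..card A}"
proof -
  have "bij_betw (pt \<circ> inv_into A pb) {1..card A} {1..card A}"
    by (rule bij_betw_trans[OF bij_betw_inv_into[OF bij_pb] bij_pt])
  then show ?thesis by (rule bij_betw_cong[THEN iffD1, rotated]) (simp add: glue_up_def)
qed

lemma bij_glue_down: "bij_betw (glue_down A pt pb) {..card A} {..card A}"
proof -
  have "bij_betw (glue_down A pt pb) ({..<card A} \<union> {card A}) ({..<card A} \<union> {card A})"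
    by (rule bij_betw_combine[OF bij_glue_down_lessThan]) (auto simp: bij_betw_def)
  then show ?thesis by (simp add: lessThan_Suc_atMost[symmetric] lessThan_Suc)
qed

lemma bij_glue_up: "bij_betw (glue_up A pt pb) {..card A} {..card A}"
proof -
  have "bij_betw (glue_up A pt pb) ({0} \<union> {1..card A}) ({0} \<union> {1..card A})"
    by (rule bij_betw_combine[OF _ bij_glue_up_atLeast1]) (auto simp: bij_betw_def)
  moreover have "{0} \<union> {1..card A} = {..card A}" by auto
  ultimately show ?thesis by simp
qed

lemma bij_vertex_perm: "bij_betw (vertex_perm A pt pb) {..card A} {..card A}"
proof -
  have "vertex_perm A pt pb = glue_up A pt pb \<circ> glue_down A pt pb"
    by (simp add: fun_eq_iff vertex_perm_def)
  then show ?thesis using bij_betw_trans[OF bij_glue_down bij_glue_up] by simp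
qed

lemma glue_down_less: "j < card A \<Longrightarrow> glue_down A pt pb j < card A"
  using bij_betwE[OF bij_glue_down_lessThan] by blast

lemma glue_down_le: "j \<le> card A \<Longrightarrow> glue_down A pt pb j \<le> card A"
  using bij_betwE[OF bij_glue_down] by blast

lemma glue_up_le: "k \<le> card A \<Longrightarrow> glue_up A pt pb k \<le> card A"
  using bij_betwE[OF bij_glue_up] by blast

lemma glue_down_eq_card_iff:
  assumes "j \<le> card A" shows "glue_down A pt pb j = card A \<longleftrightarrow> j = card A"
proof (cases "j = card A")
  case False
  then have "glue_down A pt pb j < card A" using assms glue_down_less by simp
  then show ?thesis using False by simp
qed simp

sublocale vertex: finite_inj_map "{..card A}" "vertex_perm A pt pb"
  using bij_vertex_perm by unfold_locales (auto simp: bij_betw_def)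

end

section \<open>Vertex classes are orbits\<close>

lemma top_corner_0 [simp]: "top_corner A 0 = 0"
  unfolding top_corner_def by simp

lemma top_corner_card [simp]: "1 \<le> card A \<Longrightarrow> top_corner A (card A) = card A"
  unfolding top_corner_def by simp

lemma inj_on_top_corner: "inj_on (top_corner A) {..card A}"
  unfolding top_corner_def by (rule inj_onI) (auto split: if_splits)

lemma top_corner_le_card: "x \<le> card A \<Longrightarrow> top_corner A x \<le> card A \<Longrightarrow> x = 0 \<or> x = card A"
  unfolding top_corner_def by (auto split: if_splits)

lemma top_corner_less: "x \<le> card A \<Longrightarrow> 1 \<le> card A \<Longrightarrow> top_corner A x < 2 * card A"
  unfolding top_corner_def by (auto split: if_splits)

lemma top_corner_gt_card: "1 \<le> x \<Longrightarrow> x < card A \<Longrightarrow> card A < top_corner A x"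
  unfolding top_corner_def by (auto split: if_splits)

lemma vertex_equiv_refl: "(x, x) \<in> vertex_equiv A pt pb"
  unfolding vertex_equiv_def by simp

lemma vertex_equiv_sym: "(x, y) \<in> vertex_equiv A pt pb \<Longrightarrow> (y, x) \<in> vertex_equiv A pt pb"
  unfolding vertex_equiv_def by (metis converse_Un converse_converse rtrancl_converseI sup_commute)

lemma vertex_equiv_trans:
  "(x, y) \<in> vertex_equiv A pt pb \<Longrightarrow> (y, z) \<in> vertex_equiv A pt pb \<Longrightarrow> (x, z) \<in> vertex_equiv A pt pb"
  unfolding vertex_equiv_def by (rule rtrancl_trans)

lemma glue_rel_vertex_equiv: "(x, y) \<in> glue_rel A pt pb \<Longrightarrow> (x, y) \<in> vertex_equiv A pt pb"
  unfolding vertex_equiv_def by blast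

lemma vertex_equiv_Image_eq:
  assumes "(x, y) \<in> vertex_equiv A pt pb"
  shows "vertex_equiv A pt pb `` {x} = vertex_equiv A pt pb `` {y}"
  using vertex_equiv_trans[OF assms] vertex_equiv_trans[OF vertex_equiv_sym[OF assms]] by blast

lemma vertex_equiv_closed:
  assumes "\<And>x y. (x, y) \<in> glue_rel A pt pb \<Longrightarrow> x \<in> C \<longleftrightarrow> y \<in> C"
    and "(x, y) \<in> vertex_equiv A pt pb" "x \<in> C"
  shows "y \<in> C"
  using assms(2) unfolding vertex_equiv_def
proof (induction rule: rtrancl_induct)
  case (step y z)
  then show ?case using assms(1) by blast
qed (rule assms(3))

context perm_on
begin

lemma glue_rel_eq:
  "glue_rel A pt pb = (\<lambda>j. (top_corner A j, glue_down A pt pb j)) ` {..<card A}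
      \<union> (\<lambda>k. (top_corner A (glue_up A pt pb k), k)) ` {1..card A}"
proof -
  have "glue_rel A pt pb = (\<lambda>a. (top_corner A (pt a - 1), pb a - 1)) ` A
      \<union> (\<lambda>a. (top_corner A (pt a), pb a)) ` A"
    unfolding glue_rel_def bot_corner_def by blast
  also have "(\<lambda>a. (top_corner A (pt a - 1), pb a - 1)) ` A
      = (\<lambda>j. (top_corner A j, glue_down A pt pb j)) ` ((\<lambda>k. k - 1) \<circ> pt) ` A"
    unfolding image_image using glue_down_pt by (intro image_cong) auto
  also have "(\<lambda>a. (top_corner A (pt a), pb a)) ` A
      = (\<lambda>k. (top_corner A (glue_up A pt pb k), k)) ` pb ` A"
    unfolding image_image using glue_up_pb by (intro image_cong) auto
  also have "((\<lambda>k. k - 1) \<circ> pt) ` A = {..<card A}"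
    using bij_betw_trans[OF bij_pt bij_betw_pred] by (simp add: bij_betw_def)
  also have "pb ` A = {1..card A}"
    using bij_pb by (simp add: bij_betw_def)
  finally show ?thesis .
qed

lemma glue_down_eq_top_corner:
  assumes "i \<le> card A" "x \<le> card A" "glue_down A pt pb i = top_corner A x"
  shows "x = 0 \<and> vertex_perm A pt pb i = 0 \<or> x = card A \<and> i = card A"
proof -
  have "x = 0 \<or> x = card A"
    using top_corner_le_card[OF assms(2)] assms(3) glue_down_le[OF assms(1)] by simp
  then show ?thesis
    using assms glue_down_eq_card_iff[OF assms(1)] card_pos unfolding vertex_perm_def by auto
qed

lemma vertex_orbit_subset: "Q \<in> vertex_orbits A pt pb \<Longrightarrow> Q \<subseteq> {..card A}"
  unfolding vertex_orbits_def using forward_orbit_subset[OF vertex.maps] by auto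

lemma vertex_orbit_closed:
  "Q \<in> vertex_orbits A pt pb \<Longrightarrow> i \<le> card A \<Longrightarrow> vertex_perm A pt pb i \<in> Q \<longleftrightarrow> i \<in> Q"
  unfolding vertex_orbits_def using vertex.step_in_forward_orbit_iff by auto

context
  fixes Q :: "nat set"
  assumes Q: "Q \<in> vertex_orbits A pt pb"
begin

lemma top_corner_in_corner_class:
  assumes "x \<le> card A"
  shows "top_corner A x \<in> corner_class A pt pb Q \<longleftrightarrow> x \<in> Q"
proof
  assume "top_corner A x \<in> corner_class A pt pb Q"
  then consider (top) i where "i \<in> Q" "top_corner A x = top_corner A i"
    | (bot) i where "i \<in> Q" "glue_down A pt pb i = top_corner A x"
    unfolding corner_class_def by auto
  then show "x \<in> Q"
  proof cases
    case top
    then show ?thesis using inj_onD[OF inj_on_top_corner top(2)] assms vertex_orbit_subset[OF Q] by auto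
  next
    case bot
    then have i: "i \<le> card A" using vertex_orbit_subset[OF Q] by auto
    then show ?thesis
      using glue_down_eq_top_corner[OF i assms bot(2)] vertex_orbit_closed[OF Q i] bot(1) by auto
  qed
qed (auto simp: corner_class_def)

lemma glue_down_in_corner_class:
  assumes "i \<le> card A"
  shows "glue_down A pt pb i \<in> corner_class A pt pb Q \<longleftrightarrow> i \<in> Q"
proof
  assume "glue_down A pt pb i \<in> corner_class A pt pb Q"
  then consider (top) x where "x \<in> Q" "glue_down A pt pb i = top_corner A x"
    | (bot) j where "j \<in> Q" "glue_down A pt pb i = glue_down A pt pb j"
    unfolding corner_class_def by auto
  then show "i \<in> Q"
  proof cases
    case bot
    then show ?thesis
      using inj_onD[OF bij_betw_imp_inj_on[OF bij_glue_down] bot(2)] assms vertex_orbit_subset[OF Q] by auto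
  next
    case top
    then have "x \<le> card A" using vertex_orbit_subset[OF Q] by auto
    then show ?thesis
      using glue_down_eq_top_corner[OF assms _ top(2)] vertex_orbit_closed[OF Q assms] top(1) by auto
  qed
qed (auto simp: corner_class_def)

lemma corner_class_glue_closed:
  assumes "(x, y) \<in> glue_rel A pt pb"
  shows "x \<in> corner_class A pt pb Q \<longleftrightarrow> y \<in> corner_class A pt pb Q"
proof -
  from assms consider
      (down) i where "i < card A" "x = top_corner A i" "y = glue_down A pt pb i"
    | (up) k where "1 \<le> k" "k \<le> card A" "x = top_corner A (glue_up A pt pb k)" "y = k"
    unfolding glue_rel_eq by auto
  then show ?thesis
  proof cases
    case down
    then show ?thesis
      using top_corner_in_corner_class[of i] glue_down_in_corner_class[of i] by simp
  next
    case up
    then obtain l where l: "l \<le> card A" "glue_down A pt pb l = k"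
      using bij_betw_imp_surj_on[OF bij_glue_down] by (metis atMost_iff imageE)
    have "x \<in> corner_class A pt pb Q \<longleftrightarrow> vertex_perm A pt pb l \<in> Q"
      using top_corner_in_corner_class glue_up_le up(2,3) l(2) unfolding vertex_perm_def by simp
    also have "\<dots> \<longleftrightarrow> y \<in> corner_class A pt pb Q"
      using vertex_orbit_closed[OF Q l(1)] glue_down_in_corner_class[OF l(1)] l(2) up(4) by simp
    finally show ?thesis .
  qed
qed

end

end

context perm_on
begin

context
  fixes Q :: "nat set"
  assumes Q: "Q \<in> vertex_orbits A pt pb"
begin

lemma card_corner_class:
  "card (corner_class A pt pb Q - {0, card A}) = 2 * card (Q - {0, card A})"
proof -
  obtain l0 where l0: "l0 \<le> card A" "glue_down A pt pb l0 = 0"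
    using bij_betw_imp_surj_on[OF bij_glue_down] by (metis atMost_iff imageE zero_le)
  have l0_ne: "l0 \<noteq> card A" using l0 card_pos by auto
  have l0_Q: "l0 \<in> Q \<longleftrightarrow> 0 \<in> Q"
    using vertex_orbit_closed[OF Q l0(1)] l0(2) unfolding vertex_perm_def by simp
  let ?X = "top_corner A ` (Q - {0, card A})" and ?Y = "glue_down A pt pb ` (Q - {card A, l0})"
  have top: "card A < top_corner A x" if "x \<in> Q - {0, card A}" for x
  proof (rule top_corner_gt_card)
    show "1 \<le> x" "x < card A" using that vertex_orbit_subset[OF Q] by auto
  qed
  have bot: "glue_down A pt pb x < card A" if "x \<in> Q - {card A, l0}" for x
    using glue_down_less that vertex_orbit_subset[OF Q] by auto
  have bot_ne: "glue_down A pt pb x \<noteq> 0" if "x \<in> Q - {card A, l0}" for x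
    using inj_onD[OF bij_betw_imp_inj_on[OF bij_glue_down], of x l0] l0 that vertex_orbit_subset[OF Q] by auto
  have eq: "corner_class A pt pb Q - {0, card A} = ?X \<union> ?Y"
  proof (intro equalityI subsetI)
    fix c assume c: "c \<in> corner_class A pt pb Q - {0, card A}"
    then consider (top) x where "x \<in> Q" "c = top_corner A x"
      | (bot) x where "x \<in> Q" "c = glue_down A pt pb x"
      unfolding corner_class_def by blast
    then show "c \<in> ?X \<union> ?Y"
    proof cases
      case top
      have "c \<noteq> 0" "c \<noteq> card A" using c by auto
      then have "x \<noteq> 0" "x \<noteq> card A" using top(2) card_pos by (auto simp: top_corner_def split: if_splits)
      then show ?thesis using top by blast
    next
      case bot
      then have "x \<noteq> l0" "x \<noteq> card A" using c l0(2) by auto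
      then show ?thesis using bot by blast
    qed
  next
    fix c assume "c \<in> ?X \<union> ?Y"
    then show "c \<in> corner_class A pt pb Q - {0, card A}"
      using top bot bot_ne unfolding corner_class_def by fastforce
  qed
  have disj: "?X \<inter> ?Y = {}"
    using top bot by fastforce
  have fin: "finite Q" using vertex_orbit_subset[OF Q] finite_subset by blast
  have "card ?X = card (Q - {0, card A})"
    by (rule card_image, rule inj_on_subset[OF inj_on_top_corner]) (use vertex_orbit_subset[OF Q] in auto)
  moreover have "card ?Y = card (Q - {card A, l0})"
    by (rule card_image, rule inj_on_subset[OF bij_betw_imp_inj_on[OF bij_glue_down]])
      (use vertex_orbit_subset[OF Q] in auto)
  moreover have "card (Q - {card A, l0}) = card (Q - {0, card A})"
  proof -
    have "Q - {0, card A} = (Q - {card A}) - {0}" "Q - {card A, l0} = (Q - {card A}) - {l0}"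
      by auto
    then show ?thesis using l0_Q l0_ne card_pos by (simp add: card_Diff_singleton_if)
  qed
  ultimately show ?thesis unfolding eq using card_Un_disjoint[OF _ _ disj] fin by simp
qed

end

lemma top_corner_equiv_glue_down:
  assumes "i \<le> card A"
  shows "(top_corner A i, glue_down A pt pb i) \<in> vertex_equiv A pt pb"
proof (cases "i = card A")
  case False
  then have "(top_corner A i, glue_down A pt pb i) \<in> glue_rel A pt pb"
    using assms unfolding glue_rel_eq by auto
  then show ?thesis by (rule glue_rel_vertex_equiv)
qed (use top_corner_card[OF card_pos] vertex_equiv_refl in simp)

lemma equiv_top_corner_glue_up:
  assumes "k \<le> card A"
  shows "(k, top_corner A (glue_up A pt pb k)) \<in> vertex_equiv A pt pb"
proof (cases "k = 0")
  case False
  then have "(top_corner A (glue_up A pt pb k), k) \<in> glue_rel A pt pb"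
    using assms unfolding glue_rel_eq by auto
  then show ?thesis by (rule vertex_equiv_sym[OF glue_rel_vertex_equiv])
qed (simp add: vertex_equiv_refl)

lemma top_corner_equiv_funpow:
  assumes "j \<le> card A"
  shows "(top_corner A j, top_corner A ((vertex_perm A pt pb ^^ n) j)) \<in> vertex_equiv A pt pb"
proof (induction n)
  case (Suc n)
  let ?i = "(vertex_perm A pt pb ^^ n) j"
  have i: "?i \<le> card A" using funpow_mem[OF vertex.maps, of j n] assms by auto
  have "(top_corner A ?i, top_corner A (vertex_perm A pt pb ?i)) \<in> vertex_equiv A pt pb"
    using vertex_equiv_trans[OF top_corner_equiv_glue_down[OF i]
        equiv_top_corner_glue_up[OF glue_down_le[OF i]]]
    unfolding vertex_perm_def .
  then show ?case using vertex_equiv_trans[OF Suc.IH] by (simp only: funpow.simps(2) o_apply)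
qed (simp only: funpow_0 id_apply vertex_equiv_refl)

lemma vertex_equiv_Image_top_corner:
  assumes j: "j \<le> card A"
  shows "vertex_equiv A pt pb `` {top_corner A j}
    = corner_class A pt pb (forward_orbit (vertex_perm A pt pb) j)"
proof (intro equalityI subsetI)
  let ?C = "corner_class A pt pb (forward_orbit (vertex_perm A pt pb) j)"
  have "forward_orbit (vertex_perm A pt pb) j \<in> vertex_orbits A pt pb"
    unfolding vertex_orbits_def using j by simp
  note glue_closed = corner_class_glue_closed[OF this]
  fix y assume "y \<in> vertex_equiv A pt pb `` {top_corner A j}"
  then have "(top_corner A j, y) \<in> vertex_equiv A pt pb" by simp
  moreover have "top_corner A j \<in> ?C"
    unfolding corner_class_def by (intro UnI1 imageI self_in_forward_orbit)
  ultimately show "y \<in> ?C" by (rule vertex_equiv_closed[OF glue_closed, rotated])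
next
  fix y assume "y \<in> corner_class A pt pb (forward_orbit (vertex_perm A pt pb) j)"
  then obtain i where i: "i \<in> forward_orbit (vertex_perm A pt pb) j"
    and y: "y = top_corner A i \<or> y = glue_down A pt pb i"
    unfolding corner_class_def by auto
  then obtain n where n: "i = (vertex_perm A pt pb ^^ n) j"
    unfolding forward_orbit_def by auto
  have "i \<le> card A" using funpow_mem[OF vertex.maps, of j n] j n by auto
  then have "(top_corner A j, glue_down A pt pb i) \<in> vertex_equiv A pt pb"
    using vertex_equiv_trans[OF top_corner_equiv_funpow[OF j, of n] top_corner_equiv_glue_down] n
    by simp
  then have "(top_corner A j, y) \<in> vertex_equiv A pt pb"
    using y top_corner_equiv_funpow[OF j, of n] n by auto
  then show "y \<in> vertex_equiv A pt pb `` {top_corner A j}" by simp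
qed

lemma vertex_classes_eq:
  "vertex_classes A pt pb = corner_class A pt pb ` vertex_orbits A pt pb"
proof (intro equalityI subsetI)
  fix C assume "C \<in> vertex_classes A pt pb"
  then obtain k where k: "k < 2 * card A" "C = vertex_equiv A pt pb `` {k}"
    unfolding vertex_classes_def by blast
  obtain j where j: "j \<le> card A" "C = vertex_equiv A pt pb `` {top_corner A j}"
  proof (cases "k \<le> card A")
    case True
    then obtain l where l: "l \<le> card A" "glue_down A pt pb l = k"
      using bij_betw_imp_surj_on[OF bij_glue_down] by (metis atMost_iff imageE)
    show ?thesis
      using that[OF l(1)] k(2) vertex_equiv_Image_eq[OF top_corner_equiv_glue_down[OF l(1)]] l(2)
      by simp
  next
    case False
    then have "top_corner A (2 * card A - k) = k" using k(1) unfolding top_corner_def by auto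
    moreover have "2 * card A - k \<le> card A" using False k(1) by simp
    ultimately show ?thesis using that k(2) by simp
  qed
  then show "C \<in> corner_class A pt pb ` vertex_orbits A pt pb"
    unfolding vertex_orbits_def using vertex_equiv_Image_top_corner by auto
next
  fix C assume "C \<in> corner_class A pt pb ` vertex_orbits A pt pb"
  then obtain j where j: "j \<le> card A" "C = vertex_equiv A pt pb `` {top_corner A j}"
    unfolding vertex_orbits_def using vertex_equiv_Image_top_corner by auto
  then show "C \<in> vertex_classes A pt pb"
    unfolding vertex_classes_def using top_corner_less[OF j(1) card_pos] by blast
qed

end

section \<open>Cone angles\<close>

definition side_angle :: "('a \<Rightarrow> nat) \<Rightarrow> ('a \<Rightarrow> nat) \<Rightarrow> 'a \<Rightarrow> real" where
  "side_angle pt pb a = arctan (real (pb a) - real (pt a))"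

lemma Complex_1_rcis: "Complex 1 y = rcis (sqrt (1 + y\<^sup>2)) (arctan y)"
proof -
  have "0 < sqrt (1 + y\<^sup>2)" by (simp add: add_pos_nonneg)
  then show ?thesis by (simp add: complex_eq_iff cos_arctan sin_arctan)
qed

lemma minus_rcis: "- rcis r a = rcis r (a + pi)"
  by (simp add: rcis_def cis_mult[symmetric])

lemma rcis_add_2pi: "rcis r (a + 2 * pi) = rcis r a"
  by (simp add: rcis_def cis_mult[symmetric])

lemma Arg2pi_rcis_divide:
  assumes "0 < r1" "0 < r2" "0 \<le> a1 - a2" "a1 - a2 < 2 * pi"
  shows "Arg2pi (rcis r1 a1 / rcis r2 a2) = a1 - a2"
  unfolding rcis_divide
  by (rule Arg2pi_unique[of "r1 / r2"]) (use assms in \<open>simp_all add: rcis_def cis_conv_exp\<close>)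

lemma side_vec_rcis:
  "side_vec pt pb a = rcis (sqrt (1 + (real (pb a) - real (pt a))\<^sup>2)) (side_angle pt pb a)"
  unfolding side_vec_def side_angle_def by (rule Complex_1_rcis)

lemma side_vec_radius_pos: "0 < sqrt (1 + (real (pb a) - real (pt a))\<^sup>2)"
  by (simp add: add_pos_nonneg)

lemma side_angle_nonneg: "pt a \<le> pb a \<Longrightarrow> 0 \<le> side_angle pt pb a"
  unfolding side_angle_def by simp

lemma side_angle_nonpos: "pb a \<le> pt a \<Longrightarrow> side_angle pt pb a \<le> 0"
  unfolding side_angle_def by simp

lemma side_angle_bounds: "- (pi / 2) < side_angle pt pb a" "side_angle pt pb a < pi / 2"
  unfolding side_angle_def by (rule arctan_lbound, rule arctan_ubound)

context perm_on
begin

lemma bot_vertex_0: "bot_vertex A pt pb 0 = 0"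
proof -
  have e: "{a \<in> A. pb a \<le> 0} = {}" using rank_bounds[OF bij_pb] by fastforce
  show ?thesis unfolding bot_vertex_def e by simp
qed

lemma top_vertex_0: "top_vertex A pt pb 0 = 0"
proof -
  have e: "{a \<in> A. pt a \<le> 0} = {}" using rank_bounds[OF bij_pt] by fastforce
  show ?thesis unfolding top_vertex_def e by simp
qed

lemma bot_vertex_step:
  "1 \<le> j \<Longrightarrow> j \<le> card A
   \<Longrightarrow> bot_vertex A pt pb j = bot_vertex A pt pb (j - 1) + side_vec pt pb (inv_into A pb j)"
  unfolding bot_vertex_def by (rule rank_sum_step[OF bij_pb])

lemma top_vertex_step:
  "1 \<le> j \<Longrightarrow> j \<le> card A
   \<Longrightarrow> top_vertex A pt pb j = top_vertex A pt pb (j - 1) + side_vec pt pb (inv_into A pt j)"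
  unfolding top_vertex_def by (rule rank_sum_step[OF bij_pt])

lemma bot_vertex_card: "bot_vertex A pt pb (card A) = top_vertex A pt pb (card A)"
proof -
  have "{a \<in> A. pb a \<le> card A} = A" "{a \<in> A. pt a \<le> card A} = A"
    using rank_bounds[OF bij_pb] rank_bounds[OF bij_pt] by auto
  then show ?thesis unfolding bot_vertex_def top_vertex_def by simp
qed

lemma corner_pos_bot: "k \<le> card A \<Longrightarrow> corner_pos A pt pb k = bot_vertex A pt pb k"
  unfolding corner_pos_def by simp

lemma corner_pos_top: "card A \<le> k \<Longrightarrow> corner_pos A pt pb k = top_vertex A pt pb (2 * card A - k)"
  unfolding corner_pos_def using bot_vertex_card by (cases "k = card A") simp_all

lemma corner_pos_after_top:
  assumes "1 \<le> j" "j \<le> card A"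
  shows "corner_pos A pt pb ((2 * card A - j + 1) mod (2 * card A)) = top_vertex A pt pb (j - 1)"
proof (cases "j = 1")
  case True
  then have "(2 * card A - j + 1) mod (2 * card A) = 0" using assms by simp
  then show ?thesis using corner_pos_bot[of 0] bot_vertex_0 top_vertex_0 True by simp
next
  case False
  then have "(2 * card A - j + 1) mod (2 * card A) = 2 * card A - (j - 1)" using assms by simp
  then show ?thesis using corner_pos_top[of "2 * card A - (j - 1)"] assms by simp
qed

end

lemma Arg2pi_side_vec_divide:
  "side_angle pt pb b \<le> side_angle pt pb a
   \<Longrightarrow> Arg2pi (side_vec pt pb a / side_vec pt pb b) = side_angle pt pb a - side_angle pt pb b"
  unfolding side_vec_rcis[of pt pb a] side_vec_rcis[of pt pb b]
  by (rule Arg2pi_rcis_divide[OF side_vec_radius_pos side_vec_radius_pos])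
    (use side_angle_bounds[of pt pb a] side_angle_bounds[of pt pb b] in auto)

lemma Arg2pi_minus_side_vec_divide:
  "Arg2pi (- side_vec pt pb a / side_vec pt pb b) = side_angle pt pb a + pi - side_angle pt pb b"
  unfolding side_vec_rcis[of pt pb a] side_vec_rcis[of pt pb b] minus_rcis
  by (rule Arg2pi_rcis_divide[OF side_vec_radius_pos side_vec_radius_pos])
    (use side_angle_bounds[of pt pb a] side_angle_bounds[of pt pb b] in auto)

lemma Arg2pi_side_vec_divide_minus:
  "Arg2pi (side_vec pt pb a / - side_vec pt pb b) = side_angle pt pb a + pi - side_angle pt pb b"
proof -
  have "Arg2pi (side_vec pt pb a / - side_vec pt pb b)
      = (side_angle pt pb a + 2 * pi) - (side_angle pt pb b + pi)"
    unfolding side_vec_rcis[of pt pb a] side_vec_rcis[of pt pb b] minus_rcis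
      rcis_add_2pi[symmetric, of _ "side_angle pt pb a"]
    by (rule Arg2pi_rcis_divide[OF side_vec_radius_pos side_vec_radius_pos])
      (use side_angle_bounds[of pt pb a] side_angle_bounds[of pt pb b] in auto)
  then show ?thesis by simp
qed

context perm_on
begin

lemma corner_angle_bot:
  assumes k: "1 \<le> k" "k < card A"
  shows "corner_angle A pt pb k = side_angle pt pb (inv_into A pb k) + pi - side_angle pt pb (inv_into A pb (k + 1))"
proof -
  let ?d = "card A"
  have m1: "(k + 2 * ?d - 1) mod (2 * ?d) = k - 1"
  proof -
    have e: "k + 2 * ?d - 1 = (k - 1) + 2 * ?d" using k by simp
    show ?thesis unfolding e mod_add_self2 using k by simp
  qed
  have m2: "(k + 1) mod (2 * ?d) = k + 1" using k by simp
  have v: "corner_pos A pt pb k = bot_vertex A pt pb k" using corner_pos_bot k by simp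
  have u: "corner_pos A pt pb (k - 1) = bot_vertex A pt pb (k - 1)" using corner_pos_bot k by simp
  have w: "corner_pos A pt pb (k + 1) = bot_vertex A pt pb (k + 1)" using corner_pos_bot k by simp
  have s1: "bot_vertex A pt pb k = bot_vertex A pt pb (k - 1) + side_vec pt pb (inv_into A pb k)"
    using bot_vertex_step k by simp
  have s2: "bot_vertex A pt pb (k + 1) = bot_vertex A pt pb k + side_vec pt pb (inv_into A pb (k + 1))"
    using bot_vertex_step[of "k + 1"] k by simp
  have "corner_angle A pt pb k = Arg2pi ((bot_vertex A pt pb (k - 1) - bot_vertex A pt pb k) /
      (bot_vertex A pt pb (k + 1) - bot_vertex A pt pb k))"
    unfolding corner_angle_def Let_def m1 m2 v u w ..
  also have "\<dots> = Arg2pi (- side_vec pt pb (inv_into A pb k) / side_vec pt pb (inv_into A pb (k + 1)))"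
    using s1 s2 by simp
  also have "\<dots> = side_angle pt pb (inv_into A pb k) + pi - side_angle pt pb (inv_into A pb (k + 1))" by (rule Arg2pi_minus_side_vec_divide)
  finally show ?thesis .
qed

lemma corner_angle_top:
  assumes j: "1 \<le> j" "j < card A"
  shows "corner_angle A pt pb (2 * card A - j) = side_angle pt pb (inv_into A pt (j + 1)) + pi - side_angle pt pb (inv_into A pt j)"
proof -
  let ?d = "card A"
  let ?k = "2 * ?d - j"
  have m1: "(?k + 2 * ?d - 1) mod (2 * ?d) = 2 * ?d - (j + 1)"
  proof -
    have e: "?k + 2 * ?d - 1 = (2 * ?d - (j + 1)) + 2 * ?d" using j by simp
    show ?thesis unfolding e mod_add_self2 using j by simp
  qed
  have v: "corner_pos A pt pb ?k = top_vertex A pt pb j" using corner_pos_top[of ?k] j by simp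
  have u: "corner_pos A pt pb (2 * ?d - (j + 1)) = top_vertex A pt pb (j + 1)"
    using corner_pos_top[of "2 * ?d - (j + 1)"] j by simp
  have w: "corner_pos A pt pb ((?k + 1) mod (2 * ?d)) = top_vertex A pt pb (j - 1)"
    using corner_pos_after_top[of j] j by simp
  have s1: "top_vertex A pt pb j = top_vertex A pt pb (j - 1) + side_vec pt pb (inv_into A pt j)"
    using top_vertex_step j by simp
  have s2: "top_vertex A pt pb (j + 1) = top_vertex A pt pb j + side_vec pt pb (inv_into A pt (j + 1))"
    using top_vertex_step[of "j + 1"] j by simp
  have "corner_angle A pt pb ?k = Arg2pi ((top_vertex A pt pb (j + 1) - top_vertex A pt pb j) /
      (top_vertex A pt pb (j - 1) - top_vertex A pt pb j))"
    unfolding corner_angle_def Let_def m1 v u w ..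
  also have "\<dots> = Arg2pi (side_vec pt pb (inv_into A pt (j + 1)) / - side_vec pt pb (inv_into A pt j))"
    using s1 s2 by simp
  also have "\<dots> = side_angle pt pb (inv_into A pt (j + 1)) + pi - side_angle pt pb (inv_into A pt j)" by (rule Arg2pi_side_vec_divide_minus)
  finally show ?thesis .
qed

lemma corner_angle_0:
  shows "corner_angle A pt pb 0 = side_angle pt pb (inv_into A pt 1) - side_angle pt pb (inv_into A pb 1)"
proof -
  let ?d = "card A"
  have m1: "(0 + 2 * ?d - 1) mod (2 * ?d) = 2 * ?d - 1" using card_pos by simp
  have m2: "(0 + 1) mod (2 * ?d) = 1" using card_pos by simp
  have v: "corner_pos A pt pb 0 = 0" using corner_pos_bot[of 0] bot_vertex_0 by simp
  have u: "corner_pos A pt pb (2 * ?d - 1) = top_vertex A pt pb 1"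
    using corner_pos_top[of "2 * ?d - 1"] card_pos by simp
  have w: "corner_pos A pt pb 1 = bot_vertex A pt pb 1" using corner_pos_bot[of 1] card_pos by simp
  have s1: "top_vertex A pt pb 1 = side_vec pt pb (inv_into A pt 1)"
    using top_vertex_step[of 1] card_pos top_vertex_0 by simp
  have s2: "bot_vertex A pt pb 1 = side_vec pt pb (inv_into A pb 1)"
    using bot_vertex_step[of 1] card_pos bot_vertex_0 by simp
  let ?a = "inv_into A pt 1" and ?b = "inv_into A pb 1"
  have a: "?a \<in> A" "pt ?a = 1" using rank_inv_into[OF bij_pt, of 1] card_pos by auto
  have b: "?b \<in> A" "pb ?b = 1" using rank_inv_into[OF bij_pb, of 1] card_pos by auto
  have "side_angle pt pb ?b \<le> 0"
    by (rule side_angle_nonpos) (use rank_bounds[OF bij_pt b(1)] b(2) in simp)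
  moreover have "0 \<le> side_angle pt pb ?a"
    by (rule side_angle_nonneg) (use rank_bounds[OF bij_pb a(1)] a(2) in simp)
  ultimately have le: "side_angle pt pb ?b \<le> side_angle pt pb ?a" by simp
  have "corner_angle A pt pb 0 = Arg2pi ((top_vertex A pt pb 1 - 0) / (bot_vertex A pt pb 1 - 0))"
    unfolding corner_angle_def Let_def m1 m2 v u w ..
  also have "\<dots> = Arg2pi (side_vec pt pb ?a / side_vec pt pb ?b)" using s1 s2 by simp
  also have "\<dots> = side_angle pt pb ?a - side_angle pt pb ?b" by (rule Arg2pi_side_vec_divide[OF le])
  finally show ?thesis .
qed

lemma corner_angle_card:
  shows "corner_angle A pt pb (card A) = side_angle pt pb (inv_into A pb (card A)) - side_angle pt pb (inv_into A pt (card A))"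
proof -
  let ?d = "card A"
  have m1: "(?d + 2 * ?d - 1) mod (2 * ?d) = ?d - 1"
  proof -
    have e: "?d + 2 * ?d - 1 = (?d - 1) + 2 * ?d" using card_pos by simp
    show ?thesis unfolding e mod_add_self2 using card_pos by simp
  qed
  have v: "corner_pos A pt pb ?d = bot_vertex A pt pb ?d" using corner_pos_bot by simp
  have u: "corner_pos A pt pb (?d - 1) = bot_vertex A pt pb (?d - 1)" using corner_pos_bot by simp
  have w: "corner_pos A pt pb ((?d + 1) mod (2 * ?d)) = top_vertex A pt pb (?d - 1)"
    using corner_pos_after_top[of ?d] card_pos by simp
  have s1: "bot_vertex A pt pb ?d = bot_vertex A pt pb (?d - 1) + side_vec pt pb (inv_into A pb ?d)"
    using bot_vertex_step card_pos by simp
  have s2: "top_vertex A pt pb ?d = top_vertex A pt pb (?d - 1) + side_vec pt pb (inv_into A pt ?d)"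
    using top_vertex_step card_pos by simp
  have s3: "bot_vertex A pt pb ?d = top_vertex A pt pb ?d" by (rule bot_vertex_card)
  let ?a = "inv_into A pb ?d" and ?b = "inv_into A pt ?d"
  have a: "?a \<in> A" "pb ?a = ?d" using rank_inv_into[OF bij_pb, of ?d] card_pos by auto
  have b: "?b \<in> A" "pt ?b = ?d" using rank_inv_into[OF bij_pt, of ?d] card_pos by auto
  have "side_angle pt pb ?b \<le> 0"
    by (rule side_angle_nonpos) (use rank_bounds[OF bij_pb b(1)] b(2) in simp)
  moreover have "0 \<le> side_angle pt pb ?a"
    by (rule side_angle_nonneg) (use rank_bounds[OF bij_pt a(1)] a(2) in simp)
  ultimately have le: "side_angle pt pb ?b \<le> side_angle pt pb ?a" by simp
  have "corner_angle A pt pb ?d = Arg2pi ((bot_vertex A pt pb (?d - 1) - bot_vertex A pt pb ?d) /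
      (top_vertex A pt pb (?d - 1) - bot_vertex A pt pb ?d))"
    unfolding corner_angle_def Let_def m1 v u w ..
  also have "\<dots> = Arg2pi (- side_vec pt pb ?a / - side_vec pt pb ?b)"
  proof -
    have "bot_vertex A pt pb (?d - 1) - bot_vertex A pt pb ?d = - side_vec pt pb ?a" using s1 by simp
    moreover have "top_vertex A pt pb (?d - 1) - bot_vertex A pt pb ?d = - side_vec pt pb ?b"
      using s2 s3 by simp
    ultimately show ?thesis by simp
  qed
  also have "\<dots> = side_angle pt pb ?a - side_angle pt pb ?b" unfolding minus_divide_divide by (rule Arg2pi_side_vec_divide[OF le])
  finally show ?thesis .
qed

end

(* The angle of P_pi at corner k is pi (0 at the endpoints 0 and d) corrected by the inclinations
   of the two sides meeting there, with signs. The two copies of a side have their start corners,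
   and their end corners, glued together and carry opposite signs there, so the corrections cancel
   over a vertex class. *)
definition angle_correction :: "'a set \<Rightarrow> ('a \<Rightarrow> nat) \<Rightarrow> ('a \<Rightarrow> nat) \<Rightarrow> nat \<Rightarrow> real" where
  "angle_correction A pt pb k =
     (\<Sum>a\<in>A. if top_corner A (pt a - 1) = k then side_angle pt pb a else 0)
   - (\<Sum>a\<in>A. if top_corner A (pt a) = k then side_angle pt pb a else 0)
   - (\<Sum>a\<in>A. if pb a - 1 = k then side_angle pt pb a else 0)
   + (\<Sum>a\<in>A. if pb a = k then side_angle pt pb a else 0)"

context perm_on
begin

lemma top_corner_eq_0_iff: "x \<le> card A \<Longrightarrow> top_corner A x = 0 \<longleftrightarrow> x = 0"
  unfolding top_corner_def using card_pos by auto

lemma top_corner_eq_card_iff: "x \<le> card A \<Longrightarrow> top_corner A x = card A \<longleftrightarrow> x = card A"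
  unfolding top_corner_def using card_pos by auto

lemma top_corner_eq_top_iff: "x \<le> card A \<Longrightarrow> 1 \<le> j \<Longrightarrow> j < card A \<Longrightarrow> top_corner A x = 2 * card A - j \<longleftrightarrow> x = j"
  unfolding top_corner_def using card_pos by auto

lemma top_corner_ne_bot: "x \<le> card A \<Longrightarrow> 1 \<le> k \<Longrightarrow> k < card A \<Longrightarrow> top_corner A x \<noteq> k"
  unfolding top_corner_def using card_pos by auto

lemma angle_correction_0: "angle_correction A pt pb 0 = side_angle pt pb (inv_into A pt 1) - side_angle pt pb (inv_into A pb 1)"
proof -
  have "{a \<in> A. top_corner A (pt a - 1) = 0} = {a \<in> A. pt a = 1}"
    using top_corner_eq_0_iff rank_bounds[OF bij_pt] by fastforce
  then have s1: "(\<Sum>a\<in>A. if top_corner A (pt a - 1) = 0 then side_angle pt pb a else 0) = side_angle pt pb (inv_into A pt 1)"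
    using sum_if_singleton[OF finite_A] rank_level_set[OF bij_pt, of 1] card_pos by simp
  have s2: "(\<Sum>a\<in>A. if top_corner A (pt a) = 0 then side_angle pt pb a else 0) = 0"
    by (rule sum_if_none) (use top_corner_eq_0_iff rank_bounds[OF bij_pt] in fastforce)
  have "{a \<in> A. pb a - 1 = 0} = {a \<in> A. pb a = 1}"
    using rank_bounds[OF bij_pb] by fastforce
  then have s3: "(\<Sum>a\<in>A. if pb a - 1 = 0 then side_angle pt pb a else 0) = side_angle pt pb (inv_into A pb 1)"
    using sum_if_singleton[OF finite_A] rank_level_set[OF bij_pb, of 1] card_pos by simp
  have s4: "(\<Sum>a\<in>A. if pb a = 0 then side_angle pt pb a else 0) = 0"
    by (rule sum_if_none) (use rank_bounds[OF bij_pb] in fastforce)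
  show ?thesis unfolding angle_correction_def s1 s2 s3 s4 by simp
qed

lemma angle_correction_card: "angle_correction A pt pb (card A) = side_angle pt pb (inv_into A pb (card A)) - side_angle pt pb (inv_into A pt (card A))"
proof -
  have s1: "(\<Sum>a\<in>A. if top_corner A (pt a - 1) = card A then side_angle pt pb a else 0) = 0"
    by (rule sum_if_none) (use top_corner_eq_card_iff rank_bounds[OF bij_pt] in fastforce)
  have "{a \<in> A. top_corner A (pt a) = card A} = {a \<in> A. pt a = card A}"
    using top_corner_eq_card_iff rank_bounds[OF bij_pt] by fastforce
  then have s2: "(\<Sum>a\<in>A. if top_corner A (pt a) = card A then side_angle pt pb a else 0) = side_angle pt pb (inv_into A pt (card A))"
    using sum_if_singleton[OF finite_A] rank_level_set[OF bij_pt, of "card A"] card_pos by simp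
  have s3: "(\<Sum>a\<in>A. if pb a - 1 = card A then side_angle pt pb a else 0) = 0"
    by (rule sum_if_none) (use rank_bounds[OF bij_pb] card_pos in fastforce)
  have s4: "(\<Sum>a\<in>A. if pb a = card A then side_angle pt pb a else 0) = side_angle pt pb (inv_into A pb (card A))"
    using sum_if_singleton[OF finite_A] rank_level_set[OF bij_pb, of "card A"] card_pos by simp
  show ?thesis unfolding angle_correction_def s1 s2 s3 s4 by simp
qed

lemma angle_correction_bot:
  assumes k: "1 \<le> k" "k < card A"
  shows "angle_correction A pt pb k = side_angle pt pb (inv_into A pb k) - side_angle pt pb (inv_into A pb (k + 1))"
proof -
  have s1: "(\<Sum>a\<in>A. if top_corner A (pt a - 1) = k then side_angle pt pb a else 0) = 0"
  proof (rule sum_if_none)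
    fix a assume "a \<in> A"
    then have "pt a - 1 \<le> card A" using rank_bounds[OF bij_pt] by fastforce
    then show "top_corner A (pt a - 1) \<noteq> k" by (rule top_corner_ne_bot[OF _ k])
  qed
  have s2: "(\<Sum>a\<in>A. if top_corner A (pt a) = k then side_angle pt pb a else 0) = 0"
  proof (rule sum_if_none)
    fix a assume "a \<in> A"
    then have "pt a \<le> card A" using rank_bounds[OF bij_pt] by fastforce
    then show "top_corner A (pt a) \<noteq> k" by (rule top_corner_ne_bot[OF _ k])
  qed
  have "{a \<in> A. pb a - 1 = k} = {a \<in> A. pb a = k + 1}"
    using rank_bounds[OF bij_pb] k by fastforce
  then have s3: "(\<Sum>a\<in>A. if pb a - 1 = k then side_angle pt pb a else 0) = side_angle pt pb (inv_into A pb (k + 1))"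
    using sum_if_singleton[OF finite_A] rank_level_set[OF bij_pb, of "k + 1"] k by simp
  have s4: "(\<Sum>a\<in>A. if pb a = k then side_angle pt pb a else 0) = side_angle pt pb (inv_into A pb k)"
    using sum_if_singleton[OF finite_A] rank_level_set[OF bij_pb, of k] k by simp
  show ?thesis unfolding angle_correction_def s1 s2 s3 s4 by simp
qed

lemma angle_correction_top:
  assumes j: "1 \<le> j" "j < card A"
  shows "angle_correction A pt pb (2 * card A - j) = side_angle pt pb (inv_into A pt (j + 1)) - side_angle pt pb (inv_into A pt j)"
proof -
  have "{a \<in> A. top_corner A (pt a - 1) = 2 * card A - j} = {a \<in> A. pt a = j + 1}"
    using top_corner_eq_top_iff[OF _ j] rank_bounds[OF bij_pt] by fastforce
  then have s1: "(\<Sum>a\<in>A. if top_corner A (pt a - 1) = 2 * card A - j then side_angle pt pb a else 0) = side_angle pt pb (inv_into A pt (j + 1))"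
    using sum_if_singleton[OF finite_A] rank_level_set[OF bij_pt, of "j + 1"] j by simp
  have "{a \<in> A. top_corner A (pt a) = 2 * card A - j} = {a \<in> A. pt a = j}"
    using top_corner_eq_top_iff[OF _ j] rank_bounds[OF bij_pt] by fastforce
  then have s2: "(\<Sum>a\<in>A. if top_corner A (pt a) = 2 * card A - j then side_angle pt pb a else 0) = side_angle pt pb (inv_into A pt j)"
    using sum_if_singleton[OF finite_A] rank_level_set[OF bij_pt, of j] j by simp
  have s3: "(\<Sum>a\<in>A. if pb a - 1 = 2 * card A - j then side_angle pt pb a else 0) = 0"
    by (rule sum_if_none) (use rank_bounds[OF bij_pb] j in fastforce)
  have s4: "(\<Sum>a\<in>A. if pb a = 2 * card A - j then side_angle pt pb a else 0) = 0"
    by (rule sum_if_none) (use rank_bounds[OF bij_pb] j in fastforce)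
  show ?thesis unfolding angle_correction_def s1 s2 s3 s4 by simp
qed

lemma corner_angle_eq:
  assumes k: "k < 2 * card A"
  shows "corner_angle A pt pb k = (if k = 0 \<or> k = card A then 0 else pi) + angle_correction A pt pb k"
proof -
  consider "k = 0" | "1 \<le> k \<and> k < card A" | "k = card A" | "card A < k" by linarith
  then show ?thesis
  proof cases
    case 1
    then show ?thesis using corner_angle_0 angle_correction_0 by simp
  next
    case 2
    then show ?thesis using corner_angle_bot[of k] angle_correction_bot[of k] by simp
  next
    case 3
    then show ?thesis using corner_angle_card angle_correction_card card_pos by simp
  next
    case 4
    define j where "j = 2 * card A - k"
    have j: "1 \<le> j" "j < card A" using 4 k unfolding j_def by auto
    have kj: "k = 2 * card A - j" using 4 k unfolding j_def by auto
    show ?thesis unfolding kj using corner_angle_top[OF j] angle_correction_top[OF j] j by simp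
  qed
qed

end

context perm_on
begin

lemma sum_angle_correction_class:
  assumes C: "C = vertex_equiv A pt pb `` {x}" and fC: "finite C"
  shows "(\<Sum>k\<in>C. angle_correction A pt pb k) = 0"
proof -
  have fA: "finite A" using finite_A .
  have cl1: "\<And>a. a \<in> A \<Longrightarrow> top_corner A (pt a - 1) \<in> C \<longleftrightarrow> pb a - 1 \<in> C"
  proof -
    fix a assume a: "a \<in> A"
    have "(top_corner A (pt a - 1), pb a - 1) \<in> glue_rel A pt pb"
      unfolding glue_rel_def bot_corner_def using a by blast
    then have e: "(top_corner A (pt a - 1), pb a - 1) \<in> vertex_equiv A pt pb" by (rule glue_rel_vertex_equiv)
    show "top_corner A (pt a - 1) \<in> C \<longleftrightarrow> pb a - 1 \<in> C"
      unfolding C using vertex_equiv_trans[OF _ e] vertex_equiv_trans[OF _ vertex_equiv_sym[OF e]] by blast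
  qed
  have cl2: "\<And>a. a \<in> A \<Longrightarrow> top_corner A (pt a) \<in> C \<longleftrightarrow> pb a \<in> C"
  proof -
    fix a assume a: "a \<in> A"
    have "(top_corner A (pt a), pb a) \<in> glue_rel A pt pb"
      unfolding glue_rel_def bot_corner_def using a by blast
    then have e: "(top_corner A (pt a), pb a) \<in> vertex_equiv A pt pb" by (rule glue_rel_vertex_equiv)
    show "top_corner A (pt a) \<in> C \<longleftrightarrow> pb a \<in> C"
      unfolding C using vertex_equiv_trans[OF _ e] vertex_equiv_trans[OF _ vertex_equiv_sym[OF e]] by blast
  qed
  have "(\<Sum>k\<in>C. angle_correction A pt pb k) =
      (\<Sum>k\<in>C. \<Sum>a\<in>A. if top_corner A (pt a - 1) = k then side_angle pt pb a else 0)
    - (\<Sum>k\<in>C. \<Sum>a\<in>A. if top_corner A (pt a) = k then side_angle pt pb a else 0)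
    - (\<Sum>k\<in>C. \<Sum>a\<in>A. if pb a - 1 = k then side_angle pt pb a else 0)
    + (\<Sum>k\<in>C. \<Sum>a\<in>A. if pb a = k then side_angle pt pb a else 0)"
    unfolding angle_correction_def by (simp add: sum.distrib sum_subtractf)
  also have "\<dots> =
      (\<Sum>a\<in>A. if top_corner A (pt a - 1) \<in> C then side_angle pt pb a else 0)
    - (\<Sum>a\<in>A. if top_corner A (pt a) \<in> C then side_angle pt pb a else 0)
    - (\<Sum>a\<in>A. if pb a - 1 \<in> C then side_angle pt pb a else 0)
    + (\<Sum>a\<in>A. if pb a \<in> C then side_angle pt pb a else 0)"
    unfolding sum_sum_if_eq[OF fC fA] ..
  also have "(\<Sum>a\<in>A. if top_corner A (pt a - 1) \<in> C then side_angle pt pb a else 0) =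
       (\<Sum>a\<in>A. if pb a - 1 \<in> C then side_angle pt pb a else 0)"
    by (rule sum.cong) (use cl1 in auto)
  also have "(\<Sum>a\<in>A. if top_corner A (pt a) \<in> C then side_angle pt pb a else 0) =
       (\<Sum>a\<in>A. if pb a \<in> C then side_angle pt pb a else 0)"
    by (rule sum.cong) (use cl2 in auto)
  finally show ?thesis by simp
qed

lemma class_angle_eq:
  assumes C: "C = vertex_equiv A pt pb `` {x}" and fC: "finite C" and Cs: "C \<subseteq> {..<2 * card A}"
  shows "class_angle A pt pb C = pi * card (C - {0, card A})"
proof -
  have "class_angle A pt pb C = (\<Sum>k\<in>C. (if k = 0 \<or> k = card A then 0 else pi) + angle_correction A pt pb k)"
    unfolding class_angle_def by (rule sum.cong) (use Cs corner_angle_eq in auto)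
  also have "\<dots> = (\<Sum>k\<in>C. if k = 0 \<or> k = card A then 0 else pi)"
    using sum_angle_correction_class[OF C fC] by (simp add: sum.distrib)
  also have "\<dots> = (\<Sum>k\<in>C. if \<not> (k = 0 \<or> k = card A) then pi else 0)"
    by (rule sum.cong) auto
  also have "\<dots> = (\<Sum>k\<in>{k \<in> C. \<not> (k = 0 \<or> k = card A)}. pi)"
    using sum.inter_filter[OF fC, where P="\<lambda>k. \<not> (k = 0 \<or> k = card A)" and g="\<lambda>k. pi"] by simp
  also have "{k \<in> C. \<not> (k = 0 \<or> k = card A)} = C - {0, card A}" by auto
  finally show ?thesis by simp
qed

lemma class_angle_corner_class:
  assumes Q: "Q \<in> vertex_orbits A pt pb"
  shows "class_angle A pt pb (corner_class A pt pb Q) = 2 * pi * orbit_weight (card A) Q"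
proof -
  obtain j where j: "j \<le> card A" "Q = forward_orbit (vertex_perm A pt pb) j"
    using Q unfolding vertex_orbits_def by auto
  have sub: "corner_class A pt pb Q \<subseteq> {..<2 * card A}"
  proof
    fix c assume "c \<in> corner_class A pt pb Q"
    then obtain i where i: "i \<in> Q" "c = top_corner A i \<or> c = glue_down A pt pb i"
      unfolding corner_class_def by blast
    have "i \<le> card A" using i(1) vertex_orbit_subset[OF Q] by auto
    then show "c \<in> {..<2 * card A}"
      using i(2) top_corner_less[OF _ card_pos] glue_down_le card_pos by fastforce
  qed
  have "corner_class A pt pb Q = vertex_equiv A pt pb `` {top_corner A j}"
    using vertex_equiv_Image_top_corner[OF j(1)] j(2) by simp
  then have "class_angle A pt pb (corner_class A pt pb Q)
      = pi * card (corner_class A pt pb Q - {0, card A})"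
    using class_angle_eq finite_subset[OF sub] sub by simp
  also have "\<dots> = 2 * pi * orbit_weight (card A) Q"
    using card_corner_class[OF Q] unfolding orbit_weight_def by simp
  finally show ?thesis .
qed

end

section \<open>Strata in terms of orbit weights\<close>

definition vertex_weights :: "'a set \<Rightarrow> ('a \<Rightarrow> nat) \<Rightarrow> ('a \<Rightarrow> nat) \<Rightarrow> nat multiset" where
  "vertex_weights A pt pb = image_mset (orbit_weight (card A)) (mset_set (vertex_orbits A pt pb))"

context perm_on
begin

lemma finite_vertex_orbits: "finite (vertex_orbits A pt pb)"
  unfolding vertex_orbits_def by simp

lemma inj_on_corner_class: "inj_on (corner_class A pt pb) (vertex_orbits A pt pb)"
proof (rule inj_onI)
  fix Q1 Q2 assume Q1: "Q1 \<in> vertex_orbits A pt pb" and Q2: "Q2 \<in> vertex_orbits A pt pb"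
    and eq: "corner_class A pt pb Q1 = corner_class A pt pb Q2"
  have "x \<in> Q1 \<longleftrightarrow> x \<in> Q2" if "x \<le> card A" for x
    using top_corner_in_corner_class[OF Q1 that] top_corner_in_corner_class[OF Q2 that] eq by simp
  then show "Q1 = Q2" using vertex_orbit_subset[OF Q1] vertex_orbit_subset[OF Q2] by blast
qed

lemma singular_classes_eq:
  "{C \<in> vertex_classes A pt pb. class_angle A pt pb C \<noteq> 2 * pi}
    = corner_class A pt pb ` {Q \<in> vertex_orbits A pt pb. orbit_weight (card A) Q \<noteq> 1}"
proof -
  let ?cc = "corner_class A pt pb"
  have "class_angle A pt pb (?cc Q) \<noteq> 2 * pi \<longleftrightarrow> orbit_weight (card A) Q \<noteq> 1"
    if "Q \<in> vertex_orbits A pt pb" for Q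
    using class_angle_corner_class[OF that] by simp
  then have "{Q \<in> vertex_orbits A pt pb. class_angle A pt pb (?cc Q) \<noteq> 2 * pi}
      = {Q \<in> vertex_orbits A pt pb. orbit_weight (card A) Q \<noteq> 1}"
    by (intro Collect_cong) auto
  moreover have "{C \<in> ?cc ` vertex_orbits A pt pb. class_angle A pt pb C \<noteq> 2 * pi}
      = ?cc ` {Q \<in> vertex_orbits A pt pb. class_angle A pt pb (?cc Q) \<noteq> 2 * pi}"
    by auto
  ultimately show ?thesis unfolding vertex_classes_eq by simp
qed

lemma in_stratum_iff_vertex_weights:
  "in_stratum A pt pb ms \<longleftrightarrow> filter_mset (\<lambda>w. w \<noteq> 1) (vertex_weights A pt pb) = mset (map Suc ms)"
proof -
  let ?O = "{Q \<in> vertex_orbits A pt pb. orbit_weight (card A) Q \<noteq> 1}"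
  let ?cc = "corner_class A pt pb"
  have inj: "inj_on ?cc ?O" by (rule inj_on_subset[OF inj_on_corner_class]) auto
  have angle_iff: "class_angle A pt pb (?cc Q) = 2 * pi * (real (ms ! i) + 1)
      \<longleftrightarrow> orbit_weight (card A) Q = map Suc ms ! i"
    if "Q \<in> ?O" "i < length ms" for Q i
  proof -
    have "class_angle A pt pb (?cc Q) = 2 * pi * (real (ms ! i) + 1)
        \<longleftrightarrow> real (orbit_weight (card A) Q) = real (ms ! i) + 1"
      using class_angle_corner_class that(1) by simp
    also have "\<dots> \<longleftrightarrow> real (orbit_weight (card A) Q) = real (Suc (ms ! i))" by (simp add: add.commute)
    also have "\<dots> \<longleftrightarrow> orbit_weight (card A) Q = map Suc ms ! i"
      using that(2) by (simp only: of_nat_eq_iff nth_map)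
    finally show ?thesis .
  qed
  have "in_stratum A pt pb ms \<longleftrightarrow> (\<exists>f. bij_betw f (?cc ` ?O) {..<length ms}
      \<and> (\<forall>Q\<in>?O. orbit_weight (card A) Q = map Suc ms ! f (?cc Q)))"
    unfolding in_stratum_def singular_classes_eq
  proof (intro ex_cong1 conj_cong refl)
    fix f assume "bij_betw f (?cc ` ?O) {..<length ms}"
    then have "f (?cc Q) < length ms" if "Q \<in> ?O" for Q
      using that bij_betwE by blast
    then show "(\<forall>C\<in>?cc ` ?O. class_angle A pt pb C = 2 * pi * (real (ms ! f C) + 1))
        \<longleftrightarrow> (\<forall>Q\<in>?O. orbit_weight (card A) Q = map Suc ms ! f (?cc Q))"
      using angle_iff by auto
  qed
  also have "\<dots> \<longleftrightarrow> (\<exists>g. bij_betw g ?O {..<length (map Suc ms)}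
      \<and> (\<forall>Q\<in>?O. orbit_weight (card A) Q = map Suc ms ! g Q))"
    using ex_bij_betw_image_iff[OF inj] by simp
  also have "\<dots> \<longleftrightarrow> image_mset (orbit_weight (card A)) (mset_set ?O) = mset (map Suc ms)"
    using finite_vertex_orbits by (intro bij_betw_nth_iff_image_mset) simp
  also have "image_mset (orbit_weight (card A)) (mset_set ?O)
      = filter_mset (\<lambda>w. w \<noteq> 1) (vertex_weights A pt pb)"
    unfolding vertex_weights_def image_mset_filter_mset_swap[symmetric]
    using finite_vertex_orbits by simp
  finally show ?thesis .
qed

end

section \<open>Inserting a letter\<close>

lemma orbit_weight_skip:
  assumes "X \<subseteq> {..d}" "1 \<le> p" "p \<le> d"
  shows "orbit_weight (d + 1) (skip p ` X) = orbit_weight d X"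
proof -
  have "skip p ` X - {0, d + 1} = skip p ` (X - {0, d})"
    using assms unfolding skip_def by (force split: if_splits)
  then show ?thesis
    unfolding orbit_weight_def using card_image[OF inj_on_subset[OF inj_skip]] by simp
qed

locale perm_insertion = perm_on +
  fixes a' b b' :: 'a
  assumes new: "a' \<notin> A" and b: "b \<in> A" and b': "b' \<in> A" and b_ne_b': "b \<noteq> b'"
begin

abbreviation "A2 \<equiv> insert a' A"
abbreviation "pt2 \<equiv> insert_before pt a' b"
abbreviation "pb2 \<equiv> insert_before pb a' b'"

lemma card_A2: "card A2 = card A + 1"
  using new finite_A by simp

lemma is_perm_A2: "is_perm A2 pt2 pb2"
  unfolding is_perm_def
  using bij_betw_insert_before[OF bij_pt finite_A b new]
    bij_betw_insert_before[OF bij_pb finite_A b' new] finite_A by simp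

sublocale ext: perm_on A2 pt2 pb2
  using is_perm_A2 by unfold_locales blast+

lemma pt2_old: "x \<in> A \<Longrightarrow> pt2 x = skip (pt b) (pt x)"
  using new by (auto intro: insert_before_old)

lemma pb2_old: "x \<in> A \<Longrightarrow> pb2 x = skip (pb b') (pb x)"
  using new by (auto intro: insert_before_old)

lemma inv_pt2_old: "x \<in> A \<Longrightarrow> inv_into A2 pt2 (skip (pt b) (pt x)) = x"
  using bij_betw_inv_into_left[OF ext.bij_pt, of x] pt2_old[of x] by simp

lemma inv_pb2_old: "x \<in> A \<Longrightarrow> inv_into A2 pb2 (skip (pb b') (pb x)) = x"
  using bij_betw_inv_into_left[OF ext.bij_pb, of x] pb2_old[of x] by simp

lemma pt_b_bounds: "1 \<le> pt b" "pt b \<le> card A"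
  using rank_bounds[OF bij_pt b] by auto

lemma pb_b'_bounds: "1 \<le> pb b'" "pb b' \<le> card A"
  using rank_bounds[OF bij_pb b'] by auto

lemma skip_pt_b_card: "skip (pt b) (card A) = card A + 1"
  using pt_b_bounds unfolding skip_def by auto

lemma skip_pt_b_0: "skip (pt b) 0 = 0"
  using pt_b_bounds unfolding skip_def by auto

lemma glue_down_ext_skip:
  assumes j: "j < card A" "j \<noteq> pt b - 1" "j \<noteq> pt b' - 1"
  shows "glue_down A2 pt2 pb2 (skip (pt b) j) = skip (pb b') (glue_down A pt pb j)"
proof -
  define x where "x = inv_into A pt (j + 1)"
  have x: "x \<in> A" "pt x = j + 1" using rank_inv_into[OF bij_pt, of "j+1"] j(1) unfolding x_def by auto
  have e1: "skip (pt b) j + 1 = skip (pt b) (pt x)" using x(2) j(2) pt_b_bounds unfolding skip_def by auto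
  have lt: "skip (pt b) j < card A2" using j(1) card_A2 unfolding skip_def by auto
  have "glue_down A2 pt2 pb2 (skip (pt b) j) = pb2 (inv_into A2 pt2 (skip (pt b) j + 1)) - 1"
    using lt unfolding glue_down_def by simp
  also have "\<dots> = pb2 x - 1" unfolding e1 inv_pt2_old[OF x(1)] ..
  also have "\<dots> = skip (pb b') (pb x) - 1" using pb2_old[OF x(1)] by simp
  also have "\<dots> = skip (pb b') (pb x - 1)"
  proof -
    have "x \<noteq> b'" using x(2) j(3) by auto
    then have "pb x \<noteq> pb b'" using inj_onD[OF bij_betw_imp_inj_on[OF bij_pb]] x(1) b' by blast
    moreover have "1 \<le> pb x" using rank_bounds[OF bij_pb x(1)] by simp
    ultimately show ?thesis unfolding skip_def by auto
  qed
  also have "pb x - 1 = glue_down A pt pb j" using j(1) unfolding glue_down_def x_def by simp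
  finally show ?thesis .
qed

lemma glue_down_ext_card:
  "glue_down A2 pt2 pb2 (skip (pt b) (card A)) = skip (pb b') (glue_down A pt pb (card A))"
proof -
  have "glue_down A2 pt2 pb2 (skip (pt b) (card A)) = card A + 1"
    unfolding skip_pt_b_card glue_down_def card_A2 by simp
  moreover have "skip (pb b') (glue_down A pt pb (card A)) = card A + 1"
    unfolding glue_down_card skip_def using pb_b'_bounds by auto
  ultimately show ?thesis by simp
qed

lemma glue_down_ext_before_b': "glue_down A2 pt2 pb2 (skip (pt b) (pt b' - 1)) = pb b'"
proof -
  let ?J = "pt b' - 1"
  have pb': "1 \<le> pt b'" "pt b' \<le> card A" using rank_bounds[OF bij_pt b'] by auto
  have neq: "pt b' \<noteq> pt b" using inj_onD[OF bij_betw_imp_inj_on[OF bij_pt]] b b' b_ne_b' by metis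
  have e1: "skip (pt b) ?J + 1 = skip (pt b) (pt b')" using neq pb' pt_b_bounds unfolding skip_def by auto
  have lt: "skip (pt b) ?J < card A2" using pb' card_A2 unfolding skip_def by auto
  have "glue_down A2 pt2 pb2 (skip (pt b) ?J) = pb2 (inv_into A2 pt2 (skip (pt b) ?J + 1)) - 1"
    using lt unfolding glue_down_def by simp
  also have "\<dots> = pb2 b' - 1" unfolding e1 inv_pt2_old[OF b'] ..
  also have "\<dots> = pb b'" using pb2_old[OF b'] unfolding skip_def by simp
  finally show ?thesis .
qed

lemma glue_down_ext_before_new: "glue_down A2 pt2 pb2 (pt b - 1) = pb b' - 1"
  using ext.glue_down_pt[of a'] by simp

lemma glue_down_ext_new:
  "glue_down A2 pt2 pb2 (pt b) = skip (pb b') (glue_down A pt pb (pt b - 1))"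
proof -
  have lt: "pt b < card A2" using pt_b_bounds card_A2 by auto
  have e1: "pt b + 1 = skip (pt b) (pt b)" unfolding skip_def by simp
  have "glue_down A2 pt2 pb2 (pt b) = pb2 (inv_into A2 pt2 (pt b + 1)) - 1"
    using lt unfolding glue_down_def by simp
  also have "\<dots> = pb2 b - 1" unfolding e1 inv_pt2_old[OF b] ..
  also have "\<dots> = skip (pb b') (pb b) - 1" using pb2_old[OF b] by simp
  also have "\<dots> = skip (pb b') (pb b - 1)"
  proof -
    have "pb b \<noteq> pb b'" using inj_onD[OF bij_betw_imp_inj_on[OF bij_pb]] b b' b_ne_b' by metis
    moreover have "1 \<le> pb b" using rank_bounds[OF bij_pb b] by simp
    ultimately show ?thesis unfolding skip_def by auto
  qed
  also have "pb b - 1 = glue_down A pt pb (pt b - 1)" using glue_down_pt[OF b] by simp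
  finally show ?thesis .
qed

lemma glue_up_ext_skip:
  assumes k: "k \<le> card A"
  shows "glue_up A2 pt2 pb2 (skip (pb b') k) = skip (pt b) (glue_up A pt pb k)"
proof (cases "k = 0")
  case True
  have "skip (pb b') k = 0" using True pb_b'_bounds unfolding skip_def by auto
  then show ?thesis using True glue_up_0 ext.glue_up_0 skip_pt_b_0 by simp
next
  case False
  define y where "y = inv_into A pb k"
  have y: "y \<in> A" "pb y = k" using rank_inv_into[OF bij_pb, of k] False k unfolding y_def by auto
  have ne: "skip (pb b') k \<noteq> 0" using False unfolding skip_def by auto
  have "glue_up A2 pt2 pb2 (skip (pb b') k) = pt2 (inv_into A2 pb2 (skip (pb b') k))"
    using ne unfolding glue_up_def by simp
  also have "\<dots> = pt2 y" using inv_pb2_old[OF y(1)] y(2) by simp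
  also have "\<dots> = skip (pt b) (pt y)" using pt2_old[OF y(1)] .
  also have "pt y = glue_up A pt pb k" using False unfolding glue_up_def y_def by simp
  finally show ?thesis .
qed

lemma glue_up_ext_new: "glue_up A2 pt2 pb2 (pb b') = pt b"
  using ext.glue_up_pb[of a'] by simp

lemma skip_pb_b'_before: "skip (pb b') (pb b' - 1) = pb b' - 1"
  using pb_b'_bounds unfolding skip_def by auto

lemma vertex_perm_ext_skip:
  assumes j: "j \<le> card A" "j \<noteq> pt b - 1" "j \<noteq> pt b' - 1"
  shows "vertex_perm A2 pt2 pb2 (skip (pt b) j) = skip (pt b) (vertex_perm A pt pb j)"
proof -
  have l: "glue_down A2 pt2 pb2 (skip (pt b) j) = skip (pb b') (glue_down A pt pb j)"
  proof (cases "j < card A")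
    case True
    then show ?thesis using glue_down_ext_skip j by blast
  next
    case False
    then have "j = card A" using j(1) by simp
    then show ?thesis using glue_down_ext_card by simp
  qed
  have "glue_down A pt pb j \<le> card A" using glue_down_le[OF j(1)] by auto
  then show ?thesis unfolding vertex_perm_def l using glue_up_ext_skip by blast
qed

lemma vertex_perm_ext_before_b': "vertex_perm A2 pt2 pb2 (skip (pt b) (pt b' - 1)) = pt b"
  unfolding vertex_perm_def glue_down_ext_before_b' glue_up_ext_new ..

lemma vertex_perm_ext_before_b:
  "vertex_perm A2 pt2 pb2 (skip (pt b) (pt b - 1)) = skip (pt b) (vertex_perm A pt pb (pt b' - 1))"
proof -
  have e: "skip (pt b) (pt b - 1) = pt b - 1" using pt_b_bounds unfolding skip_def by auto
  have "vertex_perm A2 pt2 pb2 (skip (pt b) (pt b - 1)) = glue_up A2 pt2 pb2 (skip (pb b') (pb b' - 1))"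
    unfolding vertex_perm_def e glue_down_ext_before_new skip_pb_b'_before ..
  also have "\<dots> = skip (pt b) (glue_up A pt pb (pb b' - 1))" using glue_up_ext_skip pb_b'_bounds by simp
  also have "\<dots> = skip (pt b) (vertex_perm A pt pb (pt b' - 1))" unfolding vertex_perm_def glue_down_pt[OF b'] ..
  finally show ?thesis .
qed

lemma vertex_perm_ext_new:
  "vertex_perm A2 pt2 pb2 (pt b) = skip (pt b) (vertex_perm A pt pb (pt b - 1))"
proof -
  have "pt b - 1 \<le> card A" using pt_b_bounds by simp
  then have "glue_down A pt pb (pt b - 1) \<le> card A" using glue_down_le by auto
  then show ?thesis unfolding vertex_perm_def glue_down_ext_new using glue_up_ext_skip by blast
qed

end

section \<open>Splitting an orbit\<close>

locale split_insertion = perm_insertion +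
  fixes n k :: nat
  assumes period: "0 < n" "(vertex_perm A pt pb ^^ n) (pt b - 1) = pt b - 1"
    and distinct: "\<And>i j. i < n \<Longrightarrow> j < n
      \<Longrightarrow> (vertex_perm A pt pb ^^ i) (pt b - 1) = (vertex_perm A pt pb ^^ j) (pt b - 1) \<Longrightarrow> i = j"
    and k: "0 < k" "k < n" "(vertex_perm A pt pb ^^ k) (pt b - 1) = pt b' - 1"
begin

sublocale split: orbit_split "card A" "vertex_perm A pt pb" "vertex_perm A2 pt2 pb2"
  "pt b" "pt b - 1" "pt b' - 1" n k
proof unfold_locales
  show "pt b - 1 \<le> card A" using pt_b_bounds by simp
qed (use period distinct k vertex_perm_ext_skip vertex_perm_ext_before_b' vertex_perm_ext_before_b
    vertex_perm_ext_new in auto)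

abbreviation "orbit_s \<equiv> forward_orbit (vertex_perm A pt pb) (pt b - 1)"
abbreviation "arc1 \<equiv> (\<lambda>i. (vertex_perm A pt pb ^^ i) (pt b - 1)) ` {1..k}"
abbreviation "arc2 \<equiv> (\<lambda>i. (vertex_perm A pt pb ^^ i) (pt b - 1)) ` {k + 1..n}"
abbreviation "arc1_orbit \<equiv> insert (pt b) (skip (pt b) ` arc1)"
abbreviation "arc2_orbit \<equiv> skip (pt b) ` arc2"

lemma orbit_s_eq: "orbit_s = arc1 \<union> arc2"
proof -
  have "{1..n} = {1..k} \<union> {k + 1..n}" using k by auto
  then show ?thesis using forward_orbit_periodic[OF period(2,1)] by (simp add: image_Un)
qed

lemma arcs_disjoint: "arc1 \<inter> arc2 = {}"
proof -
  have "i = l" if "i \<in> {1..n}" "l \<in> {1..n}"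
    "(vertex_perm A pt pb ^^ i) (pt b - 1) = (vertex_perm A pt pb ^^ l) (pt b - 1)" for i l
  proof -
    have "(vertex_perm A pt pb ^^ (i mod n)) (pt b - 1) = (vertex_perm A pt pb ^^ (l mod n)) (pt b - 1)"
      using that(3) funpow_mod_eq[OF period(2)] by simp
    then have "i mod n = l mod n" using distinct period(1) by simp
    then show ?thesis using that(1,2) by (metis atLeastAtMost_iff le_neq_implies_less mod_less
          mod_self not_gr0 not_one_le_zero)
  qed
  note inj = this
  show ?thesis
  proof (rule equals0I)
    fix x assume "x \<in> arc1 \<inter> arc2"
    then obtain i l where il: "i \<in> {1..k}" "l \<in> {k + 1..n}"
      "(vertex_perm A pt pb ^^ i) (pt b - 1) = (vertex_perm A pt pb ^^ l) (pt b - 1)"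
      by auto
    have "i = l" by (rule inj[OF _ _ il(3)]) (use il(1,2) k in auto)
    then show False using il(1,2) by simp
  qed
qed

lemma s_in_arc2: "pt b - 1 \<in> arc2"
  using period k by (intro image_eqI[of _ _ n]) auto

lemma vertex_orbits_ext_subset:
  assumes "Q \<in> vertex_orbits A2 pt2 pb2"
  shows "Q \<in> {arc2_orbit, arc1_orbit} \<union> image (skip (pt b)) ` (vertex_orbits A pt pb - {orbit_s})"
    (is "_ \<in> {?BA, ?BB} \<union> ?F ` _")
proof -
  let ?tau2 = "vertex_perm A2 pt2 pb2" and ?p = "pt b"
  have p: "?p \<le> card A + 1" "?p \<le> card A" using pt_b_bounds by auto
  have BB: "forward_orbit ?tau2 ?p = ?BB" by (rule split.forward_orbit_p)
  have BA: "forward_orbit ?tau2 (skip ?p (?p - 1)) = ?BA" by (rule split.forward_orbit_skip_s)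
  have s_le: "?p - 1 \<le> card A" using p by simp
  obtain y where y: "y \<le> card A + 1" "Q = forward_orbit ?tau2 y"
    using assms unfolding vertex_orbits_def card_A2 by auto
  show "Q \<in> {?BA, ?BB} \<union> ?F ` (vertex_orbits A pt pb - {orbit_s})"
  proof (cases "y = ?p")
    case True
    then show ?thesis using y BB by simp
  next
    case False
    then obtain j where j: "j \<le> card A" "skip ?p j = y" using skip_surj[OF y(1) _ p(2)] by blast
    consider "j \<in> arc1" | "j \<in> arc2" | "j \<notin> orbit_s" using orbit_s_eq by blast
    then show ?thesis
    proof cases
      case 1
      then have "y \<in> forward_orbit ?tau2 ?p" using BB j(2) by blast
      then have "Q = ?BB" using ext.vertex.forward_orbit_eq[of ?p y] p BB y(2) card_A2 by simp
      then show ?thesis by simp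
    next
      case 2
      then have "y \<in> forward_orbit ?tau2 (skip ?p (?p - 1))" using BA j(2) by blast
      then have "Q = ?BA"
        using ext.vertex.forward_orbit_eq[of "skip ?p (?p - 1)" y] skip_le[OF s_le] BA y(2) card_A2
        by simp
      then show ?thesis by simp
    next
      case 3
      then have "Q = ?F (forward_orbit (vertex_perm A pt pb) j)"
        using split.forward_orbit_skip_other[OF j(1)] j(2) y(2) by simp
      moreover have "forward_orbit (vertex_perm A pt pb) j \<noteq> orbit_s"
        using 3 self_in_forward_orbit by metis
      ultimately show ?thesis using j(1) unfolding vertex_orbits_def by auto
    qed
  qed
qed

lemma vertex_orbits_ext_supset:
  "{arc2_orbit, arc1_orbit} \<union> image (skip (pt b)) ` (vertex_orbits A pt pb - {orbit_s})
    \<subseteq> vertex_orbits A2 pt2 pb2"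
  (is "{?BA, ?BB} \<union> ?F ` _ \<subseteq> _")
proof -
  let ?tau2 = "vertex_perm A2 pt2 pb2" and ?p = "pt b"
  have "?BA \<in> vertex_orbits A2 pt2 pb2"
    unfolding vertex_orbits_def card_A2 split.forward_orbit_skip_s[symmetric]
    using skip_le[of "?p - 1" "card A" ?p] pt_b_bounds by (intro imageI) simp
  moreover have "?BB \<in> vertex_orbits A2 pt2 pb2"
    unfolding vertex_orbits_def card_A2 split.forward_orbit_p[symmetric]
    using pt_b_bounds by (intro imageI) simp
  moreover have "?F R \<in> vertex_orbits A2 pt2 pb2"
    if R: "R \<in> vertex_orbits A pt pb" "R \<noteq> orbit_s" for R
  proof -
    obtain j where j: "j \<le> card A" "R = forward_orbit (vertex_perm A pt pb) j"
      using R(1) unfolding vertex_orbits_def by auto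
    have "j \<notin> orbit_s"
    proof
      assume "j \<in> orbit_s"
      then have "forward_orbit (vertex_perm A pt pb) j = orbit_s"
        using vertex.forward_orbit_eq pt_b_bounds by simp
      then show False using R(2) j(2) by simp
    qed
    then have "?F R = forward_orbit ?tau2 (skip ?p j)"
      using split.forward_orbit_skip_other[OF j(1)] j(2) by simp
    then show ?thesis using skip_le[OF j(1)] unfolding vertex_orbits_def card_A2 by simp
  qed
  ultimately show ?thesis by auto
qed

lemma vertex_orbits_ext:
  "vertex_orbits A2 pt2 pb2
    = {arc2_orbit, arc1_orbit} \<union> image (skip (pt b)) ` (vertex_orbits A pt pb - {orbit_s})"
  by (rule equalityI[OF subsetI vertex_orbits_ext_supset]) (rule vertex_orbits_ext_subset)

lemma orbit_weight_orbit_s: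
  "orbit_weight (card A) orbit_s = orbit_weight (card A) arc1 + orbit_weight (card A) arc2"
proof -
  have "orbit_s - {0, card A} = (arc1 - {0, card A}) \<union> (arc2 - {0, card A})"
    using orbit_s_eq by blast
  moreover have "(arc1 - {0, card A}) \<inter> (arc2 - {0, card A}) = {}"
    using arcs_disjoint by blast
  ultimately show ?thesis unfolding orbit_weight_def by (simp add: card_Un_disjoint)
qed

lemma s_orbit_in_vertex_orbits: "orbit_s \<in> vertex_orbits A pt pb"
  unfolding vertex_orbits_def using pt_b_bounds by simp

lemma arcs_subset: "arc1 \<subseteq> {..card A}" "arc2 \<subseteq> {..card A}"
  using orbit_s_eq vertex_orbit_subset[OF s_orbit_in_vertex_orbits] by auto

lemma arc_orbits_distinct:
  "arc2_orbit \<noteq> arc1_orbit"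
  "arc1_orbit \<notin> image (skip (pt b)) ` (vertex_orbits A pt pb - {orbit_s})"
  "arc2_orbit \<notin> image (skip (pt b)) ` (vertex_orbits A pt pb - {orbit_s})"
proof -
  have p: "pt b \<notin> skip (pt b) ` X" for X
    using skip_neq[of "pt b", symmetric] by auto
  show "arc2_orbit \<noteq> arc1_orbit"
  proof
    assume "arc2_orbit = arc1_orbit"
    then have "pt b \<in> arc2_orbit" by simp
    then show False using p[of arc2] by simp
  qed
  show "arc1_orbit \<notin> image (skip (pt b)) ` (vertex_orbits A pt pb - {orbit_s})"
  proof
    assume "arc1_orbit \<in> image (skip (pt b)) ` (vertex_orbits A pt pb - {orbit_s})"
    then obtain R where "arc1_orbit = skip (pt b) ` R" by auto
    then have "pt b \<in> skip (pt b) ` R" by (metis insertI1)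
    then show False using p[of R] by simp
  qed
  show "arc2_orbit \<notin> image (skip (pt b)) ` (vertex_orbits A pt pb - {orbit_s})"
  proof
    assume "arc2_orbit \<in> image (skip (pt b)) ` (vertex_orbits A pt pb - {orbit_s})"
    then obtain R where R: "R \<in> vertex_orbits A pt pb - {orbit_s}" "skip (pt b) ` R = arc2_orbit"
      by (elim imageE) simp
    then have "R = arc2" using inj_skip by (simp add: inj_image_eq_iff)
    then have "pt b - 1 \<in> R" using s_in_arc2 by simp
    moreover obtain j where "j \<le> card A" "R = forward_orbit (vertex_perm A pt pb) j"
      using R(1) unfolding vertex_orbits_def by auto
    ultimately have "R = orbit_s" using vertex.forward_orbit_eq by simp
    then show False using R(1) by simp
  qed
qed

lemma orbit_weight_arc1_orbit: "orbit_weight (card A + 1) arc1_orbit = Suc (orbit_weight (card A) arc1)"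
proof -
  have "arc1_orbit - {0, card A + 1} = insert (pt b) (skip (pt b) ` arc1 - {0, card A + 1})"
    using pt_b_bounds by auto
  moreover have "pt b \<notin> skip (pt b) ` arc1 - {0, card A + 1}"
    using skip_neq[of "pt b", symmetric] by auto
  ultimately have "orbit_weight (card A + 1) arc1_orbit
      = Suc (orbit_weight (card A + 1) (skip (pt b) ` arc1))"
    unfolding orbit_weight_def by simp
  then show ?thesis using orbit_weight_skip[OF arcs_subset(1) pt_b_bounds] by simp
qed

lemma vertex_weights_ext:
  "vertex_weights A2 pt2 pb2 = add_mset (orbit_weight (card A) arc2)
     (add_mset (Suc (orbit_weight (card A) arc1))
       (vertex_weights A pt pb - {#orbit_weight (card A) orbit_s#}))"
proof -
  let ?O = "vertex_orbits A pt pb - {orbit_s}" and ?F = "image (skip (pt b))"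
  have "finite (?F ` ?O)" using finite_vertex_orbits by simp
  then have ext: "vertex_weights A2 pt2 pb2
      = add_mset (orbit_weight (card A + 1) arc2_orbit) (add_mset (orbit_weight (card A + 1) arc1_orbit)
          (image_mset (orbit_weight (card A + 1)) (mset_set (?F ` ?O))))"
    unfolding vertex_weights_def vertex_orbits_ext card_A2
    using arc_orbits_distinct by (simp add: mset_set.insert)
  have "image_mset (orbit_weight (card A + 1)) (mset_set (?F ` ?O))
      = image_mset (orbit_weight (card A + 1)) (image_mset ?F (mset_set ?O))"
    using inj_on_image[OF inj_on_subset[OF inj_skip subset_UNIV]]
    by (simp add: image_mset_mset_set)
  also have "\<dots> = image_mset (orbit_weight (card A)) (mset_set ?O)"
    unfolding multiset.map_comp
    using finite_vertex_orbits orbit_weight_skip[OF vertex_orbit_subset pt_b_bounds]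
    by (intro image_mset_cong) auto
  also have "\<dots> = vertex_weights A pt pb - {#orbit_weight (card A) orbit_s#}"
    unfolding vertex_weights_def mset_set.remove[OF finite_vertex_orbits s_orbit_in_vertex_orbits]
    by simp
  finally show ?thesis
    unfolding ext orbit_weight_arc1_orbit orbit_weight_skip[OF arcs_subset(2) pt_b_bounds] by simp
qed

end

context perm_on
begin

lemma split_point_exists:
  assumes Q: "Q \<in> vertex_orbits A pt pb" and m: "1 \<le> m" "m < orbit_weight (card A) Q"
  obtains s n k where "1 \<le> s" "s < card A" "Q = forward_orbit (vertex_perm A pt pb) s"
    "0 < n" "(vertex_perm A pt pb ^^ n) s = s"
    "\<And>i j. i < n \<Longrightarrow> j < n
      \<Longrightarrow> (vertex_perm A pt pb ^^ i) s = (vertex_perm A pt pb ^^ j) s \<Longrightarrow> i = j"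
    "0 < k" "k < n" "orbit_weight (card A) ((\<lambda>i. (vertex_perm A pt pb ^^ i) s) ` {1..k}) = m"
    "(vertex_perm A pt pb ^^ k) s \<noteq> 0" "(vertex_perm A pt pb ^^ k) s \<noteq> card A"
proof -
  let ?tau = "vertex_perm A pt pb"
  have "Q - {0, card A} \<noteq> {}" using m unfolding orbit_weight_def by (metis card.empty not_less0)
  then obtain s where s: "s \<in> Q" "s \<noteq> 0" "s \<noteq> card A" by auto
  have s': "1 \<le> s" "s < card A" using s vertex_orbit_subset[OF Q] by auto
  obtain j where "j \<le> card A" "Q = forward_orbit ?tau j" using Q unfolding vertex_orbits_def by auto
  then have Q_s: "Q = forward_orbit ?tau s" using vertex.forward_orbit_eq s(1) by simp
  obtain n where n: "0 < n" "(?tau ^^ n) s = s"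
    and dist: "\<And>i j. i < n \<Longrightarrow> j < n \<Longrightarrow> (?tau ^^ i) s = (?tau ^^ j) s \<Longrightarrow> i = j"
    using vertex.minimal_period[of s] s' by auto
  let ?arc = "\<lambda>i. (\<lambda>l. (?tau ^^ l) s) ` {1..i}"
  define c where "c i = orbit_weight (card A) (?arc i)" for i
  have step: "c (Suc i) \<le> c i + 1" for i
  proof -
    have "?arc (Suc i) - {0, card A} \<subseteq> insert ((?tau ^^ Suc i) s) (?arc i - {0, card A})"
      by (auto simp: atLeastAtMostSuc_conv)
    then have "card (?arc (Suc i) - {0, card A}) \<le> card (insert ((?tau ^^ Suc i) s) (?arc i - {0, card A}))"
      by (rule card_mono[rotated]) simp
    then show ?thesis unfolding c_def orbit_weight_def by (simp add: card_insert_if split: if_splits)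
  qed
  have c0: "c 0 = 0" unfolding c_def orbit_weight_def by simp
  have "c n = orbit_weight (card A) Q"
    unfolding c_def Q_s forward_orbit_periodic[OF n(2,1)] ..
  then have "m < c n" using m by simp
  then obtain k where k: "0 < k" "k < n" "c k = m" "c (k - 1) < m"
    by (rule exists_unit_step_value[OF c0 step _ m(1)])
  have "(?tau ^^ k) s \<notin> {0, card A}"
  proof
    assume "(?tau ^^ k) s \<in> {0, card A}"
    moreover have "{1..k} = insert k {1..k - 1}" using k(1) by auto
    then have "?arc k = insert ((?tau ^^ k) s) (?arc (k - 1))" by simp
    ultimately have "c k = c (k - 1)" unfolding c_def orbit_weight_def by simp
    then show False using k by simp
  qed
  then have "(?tau ^^ k) s \<noteq> 0" "(?tau ^^ k) s \<noteq> card A" by auto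
  moreover have "orbit_weight (card A) (?arc k) = m" using k(3) unfolding c_def .
  ultimately show ?thesis by (intro that[OF s' Q_s n dist k(1,2)])
qed

end

context perm_insertion
begin

lemma simple_extension_ext: "\<not> (pt b = 1 \<and> pb b' = 1) \<Longrightarrow> simple_extension A pt pb a' pt2 pb2"
  unfolding simple_extension_def using new b b' by blast

lemma irreducible_ext:
  assumes "standard_perm A pt pb" "2 \<le> pt b"
  shows "irreducible_perm A2 pt2 pb2"
proof -
  obtain c where c: "c \<in> A" "pt c = 1" "pb c = card A"
    using assms(1) unfolding standard_perm_def by blast
  have "pt2 c = 1" using pt2_old[OF c(1)] c(2) assms(2) unfolding skip_def by simp
  moreover have "pb2 c = card A2" using pb2_old[OF c(1)] c(3) pb_b'_bounds card_A2
    unfolding skip_def by simp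
  ultimately have "c \<in> {x \<in> A2. pt2 x \<le> j}" "c \<notin> {x \<in> A2. pb2 x \<le> j}"
    if "1 \<le> j" "j < card A2" for j
    using that c(1) by auto
  then show ?thesis unfolding irreducible_perm_def using is_perm_A2 by blast
qed

end

context perm_on
begin

lemma split_insertion_exists:
  assumes Q: "Q \<in> vertex_orbits A pt pb" and m: "1 \<le> m" "m < orbit_weight (card A) Q"
    and new: "a' \<notin> A"
  obtains b b' n k where "split_insertion A pt pb a' b b' n k" "2 \<le> pt b"
    "Q = forward_orbit (vertex_perm A pt pb) (pt b - 1)"
    "orbit_weight (card A) ((\<lambda>i. (vertex_perm A pt pb ^^ i) (pt b - 1)) ` {1..k}) = m"
proof -
  let ?tau = "vertex_perm A pt pb"
  obtain s n k where s: "1 \<le> s" "s < card A" and Q_s: "Q = forward_orbit ?tau s"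
    and n: "0 < n" "(?tau ^^ n) s = s"
    and dist: "\<And>i j. i < n \<Longrightarrow> j < n \<Longrightarrow> (?tau ^^ i) s = (?tau ^^ j) s \<Longrightarrow> i = j"
    and k: "0 < k" "k < n" and weight: "orbit_weight (card A) ((\<lambda>i. (?tau ^^ i) s) ` {1..k}) = m"
    and J: "(?tau ^^ k) s \<noteq> 0" "(?tau ^^ k) s \<noteq> card A"
    using split_point_exists[OF Q m] by blast
  define J where "J = (?tau ^^ k) s"
  have "J \<le> card A" using funpow_mem[OF vertex.maps, of s k] s unfolding J_def by simp
  then have J_lt: "J < card A" using J unfolding J_def by simp
  have J_ne: "J \<noteq> s" using dist[of k 0] k unfolding J_def by auto
  define b where "b = inv_into A pt (s + 1)"
  define b' where "b' = inv_into A pt (J + 1)"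
  have b: "b \<in> A" "pt b = s + 1" using rank_inv_into[OF bij_pt, of "s + 1"] s unfolding b_def by auto
  have b': "b' \<in> A" "pt b' = J + 1"
    using rank_inv_into[OF bij_pt, of "J + 1"] J_lt unfolding b'_def by auto
  have "split_insertion A pt pb a' b b' n k"
  proof (unfold_locales)
    show "b \<noteq> b'" using b b' J_ne by auto
  qed (use perm nonempty new b b' n dist k J_def in simp_all)
  then show ?thesis using that b(2) s Q_s weight by simp
qed

end

theorem lemma6p5:
  fixes A :: "'a set" and pt pb :: "'a \<Rightarrow> nat" and a' :: 'a
    and m1 m11 m12 :: nat and ms :: "nat list"
  assumes "standard_perm A pt pb"
    and "in_stratum A pt pb (m1 # ms)"
    and "m1 \<ge> 2" and "\<forall>m \<in> set ms. m \<ge> 1"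
    and "m11 \<ge> 1" and "m12 \<ge> 1" and "m11 + m12 = m1"
    and "a' \<notin> A"
  shows "\<exists>pt' pb'. simple_extension A pt pb a' pt' pb' \<and>
           irreducible_perm (insert a' A) pt' pb' \<and>
           in_stratum (insert a' A) pt' pb' (m11 # m12 # ms)"
proof -
  (* m1 \<ge> 2 follows from m11, m12 \<ge> 1, and the entries of ms are positive anyway, since
     in_stratum only lists the points of angle other than 2 pi. *)
  interpret perm_on A pt pb
    using assms(1) unfolding standard_perm_def perm_on_def by auto
  have W: "filter_mset (\<lambda>w. w \<noteq> 1) (vertex_weights A pt pb) = mset (map Suc (m1 # ms))"
    using assms(2) in_stratum_iff_vertex_weights by simp
  then have "Suc m1 \<in># filter_mset (\<lambda>w. w \<noteq> 1) (vertex_weights A pt pb)" by simp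
  then obtain Q where Q: "Q \<in> vertex_orbits A pt pb" "orbit_weight (card A) Q = Suc m1"
    unfolding vertex_weights_def using finite_vertex_orbits by auto
  have m12: "1 \<le> m12" "m12 < orbit_weight (card A) Q" using Q(2) assms(6,7) by simp_all
  obtain b b' n k where "split_insertion A pt pb a' b b' n k" "2 \<le> pt b"
    and Q_s: "Q = forward_orbit (vertex_perm A pt pb) (pt b - 1)"
    and arc1: "orbit_weight (card A) ((\<lambda>i. (vertex_perm A pt pb ^^ i) (pt b - 1)) ` {1..k}) = m12"
    by (rule split_insertion_exists[OF Q(1) m12 assms(8)])
  then interpret split_insertion A pt pb a' b b' n k by simp
  have "orbit_weight (card A) arc2 = Suc m11"
    using orbit_weight_orbit_s Q Q_s arc1 assms(7) by simp
  then have "filter_mset (\<lambda>w. w \<noteq> 1) (vertex_weights A2 pt2 pb2) = mset (map Suc (m11 # m12 # ms))"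
    unfolding vertex_weights_ext using filter_mset_replace_weight[OF W assms(5,6)] Q(2) Q_s arc1
    by (simp add: add_mset_commute)
  then have "in_stratum A2 pt2 pb2 (m11 # m12 # ms)"
    using ext.in_stratum_iff_vertex_weights by blast
  moreover have "simple_extension A pt pb a' pt2 pb2"
    using simple_extension_ext \<open>2 \<le> pt b\<close> by simp
  ultimately show ?thesis using irreducible_ext[OF assms(1) \<open>2 \<le> pt b\<close>] by blast
qed

end
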